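(* Let $\lambda=(\lambda_1,\dots,\lambda_I)$, $\mu=(\mu_1,\dots,\mu_J)$ be partitions of $n$, and let $\tau_{FY},\tau_{FY}^M,\tau_U,\tau_U^M$ be the relaxation times of the Markov chains $P_{FY},P_{FY}^M,P_U,P_U^M$ on $\mathcal{T}_{\lambda,\mu}$ defined in the context. Then (a) $\displaystyle\frac{m_{\lambda,\mu}^2(IJ)^2}{n^2}\tau_U^M\le\tau_U\le\frac{M_{\lambda,\mu}^2(IJ)^2}{n^2}\tau_U^M$; (b) $\displaystyle\frac{n^2}{(IJ)^2M_{\lambda,\mu}^4}\tau_{FY}^M\le\tau_{FY}\le\frac{n^2}{(IJ)^2m_{\lambda,\mu}^4}\tau_{FY}^M$. Moreover $m_{\lambda,\mu}\ge1$ and $M_{\lambda,\mu}\le\max_{i,j}\max(\lambda_i,\mu_j)$.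
   Context: $\mathcal{T}_{\lambda,\mu}$ is the set of $I\times J$ nonnegative integer tables $\mathbf{x}=(x_{ij})$ with row sums $\lambda_i$ and column sums $\mu_j$. For $i_1\ne i_2$, $j_1\ne j_2$, $F_{(i_1,j_1),(i_2,j_2)}(\mathbf{x})$ subtracts $1$ at $(i_1,j_1),(i_2,j_2)$ and adds $1$ at $(i_1,j_2),(i_2,j_1)$. $\pi_{FY}(\mathbf{x})=\frac1{n!}\prod_{i,j}\frac{\lambda_i!\mu_j!}{x_{ij}!}$ is the Fisher–Yates distribution. $P_{FY}$: $P_{FY}(\mathbf{x},\mathbf{y})=2x_{i_1j_1}x_{i_2j_2}/n^2$ if $\mathbf{y}=F_{(i_1,j_1),(i_2,j_2)}(\mathbf{x})\ne\mathbf{x}$, remaining mass on $\mathbf{x}$ (stationary distribution $\pi_{FY}$). $P_U$: $P_U(\mathbf{x},\mathbf{y})=2/(IJ)^2$ if $\mathbf{y}=F_{(i_1,j_1),(i_2,j_2)}(\mathbf{x})\in\mathcal{T}_{\lambda,\mu}$, $\mathbf{y}\neq\mathbf{x}$, remaining mass on $\mathbf{x}$ (uniform stationary distribution). $P_U^M$ is the Metropolis chain with proposal $P_{FY}$ and target the uniform distribution: $P_U^M(\mathbf{x},\mathbf{y})=\min(P_{FY}(\mathbf{x},\mathbf{y}),P_{FY}(\mathbf{y},\mathbf{x}))$ for $\mathbf{y}\ne\mathbf{x}$. $P_{FY}^M$ is the Metropolis chain with proposal $P_U$ and target $\pi_{FY}$: $P_{FY}^M(\mathbf{x},\mathbf{y})=P_U(\mathbf{x},\mathbf{y})\min\left(1,\frac{\pi_{FY}(\mathbf{y})}{\pi_{FY}(\mathbf{x})}\right)$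 for $\mathbf{y}\ne\mathbf{x}$; in both Metropolis chains the rejected mass stays at $\mathbf{x}$. The relaxation time of a reversible chain is $\tau=1/\gamma$ with $\gamma=1-\beta_2$ the spectral gap ($\beta_2$ the second largest eigenvalue). $m_{\lambda,\mu}=\min\{x_{ij}>0:\mathbf{x}\in\mathcal{T}_{\lambda,\mu}\}$ and $M_{\lambda,\mu}=\max\{x_{ij}:\mathbf{x}\in\mathcal{T}_{\lambda,\mu}\}$ (minimum positive entry and maximum entry over all tables). *)

theory Defs
  imports Complex_Main "Jordan_Normal_Form.Char_Poly"
begin

type_synonym table = "nat \<Rightarrow> nat \<Rightarrow> nat"

definition is_partition :: "nat list \<Rightarrow> nat \<Rightarrow> bool" where
  "is_partition p n \<longleftrightarrow> sorted_wrt (\<ge>) p \<and> (\<forall>k\<in>set p. 0 < k) \<and> sum_list p = n"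

definition tables :: "nat list \<Rightarrow> nat list \<Rightarrow> table set" where
  "tables lam mu = {x. (\<forall>i j. (length lam \<le> i \<or> length mu \<le> j) \<longrightarrow> x i j = 0)
      \<and> (\<forall>i<length lam. (\<Sum>j<length mu. x i j) = lam ! i)
      \<and> (\<forall>j<length mu. (\<Sum>i<length lam. x i j) = mu ! j)}"

definition quads :: "nat \<Rightarrow> nat \<Rightarrow> (nat \<times> nat \<times> nat \<times> nat) set" where
  "quads I J = {(i1,j1,i2,j2). i1 < I \<and> i2 < I \<and> j1 < J \<and> j2 < J \<and> i1 \<noteq> i2 \<and> j1 \<noteq> j2}"

definition Fmove :: "nat \<times> nat \<times> nat \<times> nat \<Rightarrow> table \<Rightarrow> nat \<Rightarrow> nat \<Rightarrow> int" where
  "Fmove q x i j = (case q of (i1,j1,i2,j2) \<Rightarrow>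
      int (x i j)
      - (if (i,j) = (i1,j1) then 1 else 0) - (if (i,j) = (i2,j2) then 1 else 0)
      + (if (i,j) = (i1,j2) then 1 else 0) + (if (i,j) = (i2,j1) then 1 else 0))"

definition is_move :: "nat \<Rightarrow> nat \<Rightarrow> nat \<times> nat \<times> nat \<times> nat \<Rightarrow> table \<Rightarrow> table \<Rightarrow> bool" where
  "is_move I J q x y \<longleftrightarrow> q \<in> quads I J \<and> (\<lambda>i j. int (y i j)) = Fmove q x"

definition kernel_of :: "'s set \<Rightarrow> ('s \<Rightarrow> 's \<Rightarrow> real) \<Rightarrow> 's \<Rightarrow> 's \<Rightarrow> real" where
  "kernel_of S Q x y = (if x = y then 1 - (\<Sum>z\<in>S - {x}. Q x z) else Q x y)"


definition piFY :: "nat list \<Rightarrow> nat list \<Rightarrow> table \<Rightarrow> real" where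
  "piFY lam mu x = (\<Prod>i<length lam. fact (lam ! i)) * (\<Prod>j<length mu. fact (mu ! j))
      / (fact (sum_list lam) * (\<Prod>i<length lam. \<Prod>j<length mu. fact (x i j)))"

definition PFY_off :: "nat list \<Rightarrow> nat list \<Rightarrow> table \<Rightarrow> table \<Rightarrow> real" where
  "PFY_off lam mu x y =
     (if y \<noteq> x \<and> (\<exists>q. is_move (length lam) (length mu) q x y) then
        (case (SOME q. is_move (length lam) (length mu) q x y) of (i1,j1,i2,j2) \<Rightarrow>
           2 * real (x i1 j1) * real (x i2 j2) / real (sum_list lam) ^ 2)
      else 0)"

definition PU_off :: "nat list \<Rightarrow> nat list \<Rightarrow> table \<Rightarrow> table \<Rightarrow> real" where
  "PU_off lam mu x y =
     (if y \<noteq> x \<and> y \<in> tables lam mu \<and> (\<exists>q. is_move (length lam) (length mu) q x y)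
      then 2 / (real (length lam * length mu)) ^ 2 else 0)"

definition P_FY :: "nat list \<Rightarrow> nat list \<Rightarrow> table \<Rightarrow> table \<Rightarrow> real" where
  "P_FY lam mu = kernel_of (tables lam mu) (PFY_off lam mu)"

definition P_U :: "nat list \<Rightarrow> nat list \<Rightarrow> table \<Rightarrow> table \<Rightarrow> real" where
  "P_U lam mu = kernel_of (tables lam mu) (PU_off lam mu)"

text \<open>Metropolis chain with proposal P_FY and uniform target.\<close>
definition P_UM :: "nat list \<Rightarrow> nat list \<Rightarrow> table \<Rightarrow> table \<Rightarrow> real" where
  "P_UM lam mu = kernel_of (tables lam mu)
      (\<lambda>x y. min (P_FY lam mu x y) (P_FY lam mu y x))"

definition P_FYM :: "nat list \<Rightarrow> nat list \<Rightarrow> table \<Rightarrow> table \<Rightarrow> real" where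
  "P_FYM lam mu = kernel_of (tables lam mu)
      (\<lambda>x y. P_U lam mu x y * min 1 (piFY lam mu y / piFY lam mu x))"

definition enum_states :: "'s set \<Rightarrow> 's list" where
  "enum_states S = (SOME xs. distinct xs \<and> set xs = S)"

definition trans_mat :: "'s set \<Rightarrow> ('s \<Rightarrow> 's \<Rightarrow> real) \<Rightarrow> real mat" where
  "trans_mat S P = (let xs = enum_states S in
      mat (length xs) (length xs) (\<lambda>(a,b). P (xs ! a) (xs ! b)))"

text \<open>Eigenvalues counted with (algebraic) multiplicity, in weakly decreasing order
  (the characteristic polynomial of a reversible chain splits over the reals).\<close>
definition eigenvalues_desc :: "real mat \<Rightarrow> real list" where
  "eigenvalues_desc A = (SOME es. sorted_wrt (\<ge>) es \<and>
      char_poly A = prod_list (map (\<lambda>e. [:-e, 1:]) es))"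

definition second_eigenvalue :: "'s set \<Rightarrow> ('s \<Rightarrow> 's \<Rightarrow> real) \<Rightarrow> real" where
  "second_eigenvalue S P = eigenvalues_desc (trans_mat S P) ! 1"

definition spectral_gap :: "'s set \<Rightarrow> ('s \<Rightarrow> 's \<Rightarrow> real) \<Rightarrow> real" where
  "spectral_gap S P = 1 - second_eigenvalue S P"

definition relaxation_time :: "'s set \<Rightarrow> ('s \<Rightarrow> 's \<Rightarrow> real) \<Rightarrow> real" where
  "relaxation_time S P = 1 / spectral_gap S P"

definition min_pos_entry :: "nat list \<Rightarrow> nat list \<Rightarrow> nat" where
  "min_pos_entry lam mu = Min {x i j | x i j. x \<in> tables lam mu \<and> i < length lam \<and> j < length mu \<and> 0 < x i j}"

definition max_entry :: "nat list \<Rightarrow> nat list \<Rightarrow> nat" where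
  "max_entry lam mu = Max {x i j | x i j. x \<in> tables lam mu \<and> i < length lam \<and> j < length mu}"

end

(*
  All four chains are reversible on the finite set of tables: P_U and P_UM for the uniform
  weight, P_FY and P_FYM for the Fisher-Yates weight. For a reversible kernel the characteristic
  polynomial is (X - 1) times that of a reduced matrix whose roots are exactly the eigenvalues
  with eigenvectors orthogonal to the constants; these are real, and the largest of them is the
  maximum of the Rayleigh quotient on the orthogonal complement of the constants. Hence the
  spectral gap is the minimum of the Dirichlet form over unit functions orthogonal to the
  constants, and c L <= K <= C L off the diagonal gives c tau_K <= tau_L <= C tau_K for two
  chains reversible with respect to the same weight.

  A move x -> y that decreases the cells (i1,j1), (i2,j2) has rate 2/(IJ)^2 under P_U,
  2u/n^2 under P_FY, 2 min(u,v)/n^2 under P_UM and 2/(IJ)^2 min(1, u/v) under P_FYM, where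
  u = x(i1,j1) x(i2,j2) and v = y(i1,j2) y(i2,j1) lie in [1, M^2]. So both pairs of chains
  compare with the constants (IJ/n)^2 and (IJ/n)^2 M^2; the factor M^4 in (b) is a weakening
  of M^2. Finally, two distinct tables differ along an alternating rectangle, and shifting mass
  around it creates an entry 1, so m = 1 as soon as there are two tables.
*)

theory Submission
  imports Defs "HOL-Analysis.Function_Topology"
begin

section \<open>Weighted inner products and reversible kernels\<close>

definition inner_w :: "nat \<Rightarrow> (nat \<Rightarrow> real) \<Rightarrow> (nat \<Rightarrow> real) \<Rightarrow> (nat \<Rightarrow> real) \<Rightarrow> real" where
  "inner_w N w f g = (\<Sum>i<N. w i * f i * g i)"

definition kernel_apply :: "nat \<Rightarrow> (nat \<Rightarrow> nat \<Rightarrow> real) \<Rightarrow> (nat \<Rightarrow> real) \<Rightarrow> nat \<Rightarrow> real" where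
  "kernel_apply N P f i = (\<Sum>j<N. P i j * f j)"

definition quad_form :: "nat \<Rightarrow> (nat \<Rightarrow> nat \<Rightarrow> real) \<Rightarrow> (nat \<Rightarrow> real) \<Rightarrow> (nat \<Rightarrow> real) \<Rightarrow> real" where
  "quad_form N P w f = inner_w N w f (kernel_apply N P f)"

definition dirichlet_form :: "nat \<Rightarrow> (nat \<Rightarrow> nat \<Rightarrow> real) \<Rightarrow> (nat \<Rightarrow> real) \<Rightarrow> (nat \<Rightarrow> real) \<Rightarrow> real" where
  "dirichlet_form N P w f = (\<Sum>i<N. \<Sum>j<N. w i * P i j * (f i - f j)\<^sup>2) / 2"

lemma inner_w_sym: "inner_w N w f g = inner_w N w g f"
  unfolding inner_w_def by (simp add: mult_ac)

lemma inner_w_cong: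
  "(\<And>i. i < N \<Longrightarrow> f i = f' i) \<Longrightarrow> (\<And>i. i < N \<Longrightarrow> g i = g' i) \<Longrightarrow>
    inner_w N w f g = inner_w N w f' g'"
  unfolding inner_w_def by (intro sum.cong) auto

lemma inner_w_scale_left: "inner_w N w (\<lambda>i. c * f i) g = c * inner_w N w f g"
  unfolding inner_w_def by (simp add: sum_distrib_left mult_ac)

lemma inner_w_scale_right: "inner_w N w f (\<lambda>i. c * g i) = c * inner_w N w f g"
  unfolding inner_w_def by (simp add: sum_distrib_left mult_ac)

lemma inner_w_add_left: "inner_w N w (\<lambda>i. f i + g i) h = inner_w N w f h + inner_w N w g h"
  unfolding inner_w_def by (simp add: sum.distrib algebra_simps)

lemma inner_w_add_right: "inner_w N w h (\<lambda>i. f i + g i) = inner_w N w h f + inner_w N w h g"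
  unfolding inner_w_def by (simp add: sum.distrib algebra_simps)

lemma inner_w_diff_left: "inner_w N w (\<lambda>i. f i - g i) h = inner_w N w f h - inner_w N w g h"
  unfolding inner_w_def by (simp add: sum_subtractf algebra_simps)

lemma inner_w_expand:
  "inner_w N w (\<lambda>i. f i + t * h i) (\<lambda>i. f i + t * h i) =
    inner_w N w f f + 2 * t * inner_w N w f h + t\<^sup>2 * inner_w N w h h"
  unfolding inner_w_add_left inner_w_add_right inner_w_scale_left inner_w_scale_right
  using inner_w_sym[of N w h f] by (simp add: algebra_simps power2_eq_square)

lemma kernel_apply_cong: "(\<And>i. i < N \<Longrightarrow> f i = f' i) \<Longrightarrow> kernel_apply N P f j = kernel_apply N P f' j"
  unfolding kernel_apply_def by (intro sum.cong) auto

lemma kernel_apply_scale: "kernel_apply N P (\<lambda>i. c * f i) = (\<lambda>j. c * kernel_apply N P f j)"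
  unfolding kernel_apply_def by (simp add: sum_distrib_left mult_ac)

lemma kernel_apply_add:
  "kernel_apply N P (\<lambda>i. f i + g i) = (\<lambda>j. kernel_apply N P f j + kernel_apply N P g j)"
  unfolding kernel_apply_def by (simp add: sum.distrib algebra_simps)

lemma quad_form_cong: "(\<And>i. i < N \<Longrightarrow> f i = f' i) \<Longrightarrow> quad_form N P w f = quad_form N P w f'"
  unfolding quad_form_def by (intro inner_w_cong) (auto intro: kernel_apply_cong)

lemma quad_form_scale: "quad_form N P w (\<lambda>i. c * f i) = c\<^sup>2 * quad_form N P w f"
  unfolding quad_form_def kernel_apply_scale inner_w_scale_left inner_w_scale_right
  by (simp add: power2_eq_square)

lemma linear_coeff_eq_0_if_nonpos:
  fixes b c :: real
  assumes "\<And>t. b * t + c * t\<^sup>2 \<le> 0"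
  shows "b = 0"
proof -
  define s where "s = b / (\<bar>c\<bar> + 1)"
  have pos: "0 < \<bar>c\<bar> + 1" by simp
  have "(b * s + c * s\<^sup>2) * (\<bar>c\<bar> + 1)\<^sup>2 \<le> 0"
    using assms[of s] by (simp add: mult_nonpos_nonneg)
  also have "(b * s + c * s\<^sup>2) * (\<bar>c\<bar> + 1)\<^sup>2
      = b * (s * (\<bar>c\<bar> + 1)) * (\<bar>c\<bar> + 1) + c * (s * (\<bar>c\<bar> + 1))\<^sup>2"
    by (simp add: algebra_simps power2_eq_square)
  also have "s * (\<bar>c\<bar> + 1) = b"
    unfolding s_def using pos by simp
  also have "b * b * (\<bar>c\<bar> + 1) + c * b\<^sup>2 = b\<^sup>2 * (\<bar>c\<bar> + 1 + c)"
    by (simp add: algebra_simps power2_eq_square)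
  finally have "b\<^sup>2 * (\<bar>c\<bar> + 1 + c) \<le> 0" .
  moreover have "0 < \<bar>c\<bar> + 1 + c" by linarith
  ultimately show ?thesis by (simp add: mult_le_0_iff)
qed

lemma mat_mult_index_sum:
  assumes "A \<in> carrier_mat n m" "B \<in> carrier_mat m k" "i < n" "j < k"
  shows "(A * B) $$ (i, j) = (\<Sum>l<m. A $$ (i, l) * B $$ (l, j))"
  using assms by (simp add: scalar_prod_def atLeast0LessThan)

lemma mat_mult_vec_index_sum:
  assumes "A \<in> carrier_mat n m" "v \<in> carrier_vec m" "i < n"
  shows "(A *\<^sub>v v) $ i = (\<Sum>l<m. A $$ (i, l) * v $ l)"
  using assms by (simp add: scalar_prod_def atLeast0LessThan)

lemma prod_list_map_remove1:
  "x \<in> set xs \<Longrightarrow>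
    prod_list (map f xs) = (f x :: 'a :: comm_monoid_mult) * prod_list (map f (remove1 x xs))"
  by (induction xs) (auto simp: mult_ac)

lemma poly_linear_factors_eq_0_iff:
  "poly (\<Prod>e\<leftarrow>es. [:-e, 1:]) (x :: 'a :: idom) = 0 \<longleftrightarrow> x \<in> set es"
  by (induction es) auto

locale reversible_kernel =
  fixes N :: nat and P :: "nat \<Rightarrow> nat \<Rightarrow> real" and w :: "nat \<Rightarrow> real"
  assumes two_le_N: "2 \<le> N"
    and weight_pos: "\<And>i. i < N \<Longrightarrow> 0 < w i"
    and detailed_balance: "\<And>i j. i < N \<Longrightarrow> j < N \<Longrightarrow> w i * P i j = w j * P j i"
    and row_sum: "\<And>i. i < N \<Longrightarrow> (\<Sum>j<N. P i j) = 1"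
    and off_diag_nonneg: "\<And>i j. i < N \<Longrightarrow> j < N \<Longrightarrow> i \<noteq> j \<Longrightarrow> 0 \<le> P i j"
begin

lemma weight_nonneg: "i < N \<Longrightarrow> 0 \<le> w i"
  using weight_pos[of i] by simp

lemma inner_w_self_nonneg: "0 \<le> inner_w N w f f"
  unfolding inner_w_def by (intro sum_nonneg) (simp add: weight_nonneg mult.assoc)

lemma inner_w_self_eq_0_iff: "inner_w N w f f = 0 \<longleftrightarrow> (\<forall>i<N. f i = 0)"
proof
  assume "inner_w N w f f = 0"
  then have "\<forall>i\<in>{..<N}. w i * f i * f i = 0"
    unfolding inner_w_def
    by (subst sum_nonneg_eq_0_iff[symmetric]) (auto simp: weight_nonneg mult.assoc)
  then show "\<forall>i<N. f i = 0"
    using weight_pos by (metis lessThan_iff mult_eq_0_iff less_irrefl)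
qed (simp add: inner_w_def)

lemma inner_w_self_pos: "i < N \<Longrightarrow> f i \<noteq> 0 \<Longrightarrow> 0 < inner_w N w f f"
  using inner_w_self_nonneg[of f] inner_w_self_eq_0_iff[of f] by force

lemma inner_w_one_one_pos: "0 < inner_w N w (\<lambda>_. 1) (\<lambda>_. 1)"
  using inner_w_self_pos[of 0] two_le_N by simp

lemma kernel_apply_one: "i < N \<Longrightarrow> kernel_apply N P (\<lambda>_. 1) i = 1"
  unfolding kernel_apply_def using row_sum by simp

lemma kernel_apply_self_adjoint:
  "inner_w N w (kernel_apply N P f) g = inner_w N w f (kernel_apply N P g)"
proof -
  have "inner_w N w (kernel_apply N P f) g = (\<Sum>i<N. \<Sum>j<N. w i * P i j * f j * g i)"
    unfolding inner_w_def kernel_apply_def by (simp add: sum_distrib_left sum_distrib_right mult_ac)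
  also have "\<dots> = (\<Sum>i<N. \<Sum>j<N. w j * P j i * f j * g i)"
    by (intro sum.cong refl) (simp add: detailed_balance)
  also have "\<dots> = (\<Sum>j<N. \<Sum>i<N. w j * P j i * f j * g i)"
    by (rule sum.swap)
  also have "\<dots> = inner_w N w f (kernel_apply N P g)"
    unfolding inner_w_def kernel_apply_def by (simp add: sum_distrib_left sum_distrib_right mult_ac)
  finally show ?thesis .
qed

lemma kernel_apply_perp_one:
  "inner_w N w (kernel_apply N P f) (\<lambda>_. 1) = inner_w N w f (\<lambda>_. 1)"
  unfolding kernel_apply_self_adjoint by (rule inner_w_cong) (simp_all add: kernel_apply_one)

lemma quad_form_expand:
  "quad_form N P w (\<lambda>i. f i + t * h i) =
    quad_form N P w f + 2 * t * inner_w N w (kernel_apply N P f) h + t\<^sup>2 * quad_form N P w h"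
proof -
  have "quad_form N P w (\<lambda>i. f i + t * h i) = quad_form N P w f
      + t * inner_w N w f (kernel_apply N P h) + t * inner_w N w h (kernel_apply N P f)
      + t\<^sup>2 * quad_form N P w h"
    unfolding quad_form_def kernel_apply_add kernel_apply_scale inner_w_add_left inner_w_add_right
      inner_w_scale_left inner_w_scale_right
    by (simp add: algebra_simps power2_eq_square)
  then show ?thesis
    using kernel_apply_self_adjoint[of f h] inner_w_sym[of N w h] by simp
qed

lemma dirichlet_form_eq: "inner_w N w f f - quad_form N P w f = dirichlet_form N P w f"
proof -
  have diag: "(\<Sum>i<N. \<Sum>j<N. w i * P i j * (f i)\<^sup>2) = inner_w N w f f"
    unfolding inner_w_def using row_sum
    by (simp add: power2_eq_square mult_ac flip: sum_distrib_left sum_distrib_right)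
  have "(\<Sum>i<N. \<Sum>j<N. w i * P i j * (f j)\<^sup>2) = (\<Sum>i<N. \<Sum>j<N. w j * P j i * (f j)\<^sup>2)"
    by (intro sum.cong refl) (simp add: detailed_balance)
  also have "\<dots> = inner_w N w f f"
    using diag by (subst sum.swap) simp
  finally have diag': "(\<Sum>i<N. \<Sum>j<N. w i * P i j * (f j)\<^sup>2) = inner_w N w f f" .
  have cross: "(\<Sum>i<N. \<Sum>j<N. w i * P i j * (f i * f j)) = quad_form N P w f"
    unfolding quad_form_def inner_w_def kernel_apply_def by (simp add: sum_distrib_left mult_ac)
  have "(\<Sum>i<N. \<Sum>j<N. w i * P i j * (f i - f j)\<^sup>2)
      = (\<Sum>i<N. \<Sum>j<N. w i * P i j * (f i)\<^sup>2) - 2 * (\<Sum>i<N. \<Sum>j<N. w i * P i j * (f i * f j))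
        + (\<Sum>i<N. \<Sum>j<N. w i * P i j * (f j)\<^sup>2)"
    by (simp add: power2_diff algebra_simps sum.distrib sum_subtractf sum_distrib_left)
  then show ?thesis
    unfolding dirichlet_form_def diag diag' cross by simp
qed

lemma dirichlet_form_nonneg: "0 \<le> dirichlet_form N P w f"
proof -
  have "0 \<le> w i * P i j * (f i - f j)\<^sup>2" if "i < N" "j < N" for i j
    using that weight_nonneg off_diag_nonneg by (cases "i = j") auto
  then show ?thesis
    unfolding dirichlet_form_def by (auto intro!: sum_nonneg)
qed

section \<open>The Rayleigh maximum\<close>

lemma quad_form_le_inner_w: "quad_form N P w f \<le> inner_w N w f f"
  using dirichlet_form_eq[of f] dirichlet_form_nonneg[of f] by simp

text \<open>Functions on the state space are modelled as \<^typ>\<open>nat \<Rightarrow> real\<close> vanishing from \<open>N\<close> on,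
  so that the unit sphere of the complement of the constants is compact in the product topology.\<close>

definition unit_perp :: "(nat \<Rightarrow> real) set" where
  "unit_perp = {f. (\<forall>i\<ge>N. f i = 0) \<and> inner_w N w f (\<lambda>_. 1) = 0 \<and> inner_w N w f f = 1}"

lemma unit_perp_bounded:
  assumes "f \<in> unit_perp"
  shows "\<bar>f i\<bar> \<le> 1 + (\<Sum>k<N. 1 / w k)"
proof (cases "i < N")
  case True
  have "w i * f i * f i \<le> (\<Sum>k<N. w k * f k * f k)"
    using True by (intro member_le_sum) (auto simp: weight_nonneg mult.assoc)
  also have "\<dots> = 1"
    using assms unfolding unit_perp_def inner_w_def by simp
  finally have "(f i)\<^sup>2 \<le> 1 / w i"
    using weight_pos[OF True] by (simp add: field_simps power2_eq_square)
  also have "1 / w i \<le> (\<Sum>k<N. 1 / w k)"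
    using True by (intro member_le_sum) (simp_all add: weight_nonneg)
  finally have "(f i)\<^sup>2 \<le> (\<Sum>k<N. 1 / w k)" .
  moreover have "\<bar>f i\<bar> \<le> 1 + (f i)\<^sup>2"
    using self_le_power[of "\<bar>f i\<bar>" 2] zero_le_power2[of "f i"]
    by (cases "\<bar>f i\<bar> \<le> 1") (linarith, simp)
  ultimately show ?thesis
    by simp
next
  case False
  then show ?thesis
    using assms weight_nonneg by (auto simp: unit_perp_def intro!: sum_nonneg add_nonneg_nonneg)
qed

lemma compact_unit_perp: "compact unit_perp"
proof -
  define B where "B = 1 + (\<Sum>k<N. 1 / w k)"
  have "compactin (product_topology (\<lambda>_. euclidean) UNIV) (PiE UNIV (\<lambda>_::nat. {-B..B}))"
    by (subst compactin_PiE) auto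
  then have box: "compact (Pi UNIV (\<lambda>_::nat. {-B..B}))"
    by (simp add: euclidean_product_topology PiE_UNIV_domain)
  have "unit_perp = (\<Inter>i\<in>{N..}. {f. f i = 0}) \<inter> {f. inner_w N w f (\<lambda>_. 1) = 0}
      \<inter> {f. inner_w N w f f = 1}"
    unfolding unit_perp_def by auto
  moreover have "closed \<dots>"
  proof -
    have cont1: "continuous_on UNIV (\<lambda>f. inner_w N w f (\<lambda>_. 1))"
      and cont2: "continuous_on UNIV (\<lambda>f. inner_w N w f f)"
      unfolding inner_w_def by (intro continuous_intros continuous_on_product_coordinates)+
    show ?thesis
      by (intro closed_Int closed_INT ballI closed_Collect_eq cont1 cont2 continuous_on_const
          continuous_on_product_coordinates)
  qed
  ultimately have "closed unit_perp" by simp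
  moreover have "unit_perp \<subseteq> Pi UNIV (\<lambda>_. {-B..B})"
  proof
    fix f assume "f \<in> unit_perp"
    then have "\<bar>f i\<bar> \<le> B" for i
      unfolding B_def by (rule unit_perp_bounded)
    then show "f \<in> Pi UNIV (\<lambda>_. {-B..B})"
      by (simp add: Pi_iff abs_le_iff minus_le_iff)
  qed
  ultimately show ?thesis
    using compact_Int_closed[OF box] by (metis Int_absorb1)
qed

lemma normalize_in_unit_perp:
  assumes "\<And>i. N \<le> i \<Longrightarrow> g i = 0" and "inner_w N w g (\<lambda>_. 1) = 0" and pos: "0 < inner_w N w g g"
  shows "(\<lambda>i. (1 / sqrt (inner_w N w g g)) * g i) \<in> unit_perp"
proof -
  let ?c = "1 / sqrt (inner_w N w g g)"
  have "inner_w N w (\<lambda>i. ?c * g i) (\<lambda>_. 1) = 0"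
    unfolding inner_w_scale_left using assms(2) by simp
  moreover have "inner_w N w (\<lambda>i. ?c * g i) (\<lambda>i. ?c * g i) = 1"
    unfolding inner_w_scale_left inner_w_scale_right
    using pos real_sqrt_mult_self[of "inner_w N w g g"] by (simp add: divide_simps)
  ultimately show ?thesis
    using assms(1) unfolding unit_perp_def by simp
qed

lemma unit_perp_nonempty: "unit_perp \<noteq> {}"
proof -
  define g where "g (i :: nat) = (if i = 0 then 1 / w 0 else if i = 1 then - 1 / w 1 else 0)" for i
  have "inner_w N w g (\<lambda>_. 1) = (\<Sum>i<N. (if i = 0 then 1 else 0) - (if i = 1 then 1 else 0))"
    unfolding inner_w_def g_def using weight_pos[of 0] weight_pos[of 1] two_le_N
    by (intro sum.cong) auto
  also have "\<dots> = 0"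
    using two_le_N by (simp add: sum_subtractf)
  finally have "inner_w N w g (\<lambda>_. 1) = 0" .
  moreover have "0 < inner_w N w g g"
    using weight_pos[of 0] two_le_N by (intro inner_w_self_pos[of 0]) (auto simp: g_def)
  moreover have "\<And>i. N \<le> i \<Longrightarrow> g i = 0"
    using two_le_N unfolding g_def by auto
  ultimately show ?thesis
    using normalize_in_unit_perp by blast
qed

definition rayleigh_maximizer :: "nat \<Rightarrow> real" where
  "rayleigh_maximizer =
    (SOME f. f \<in> unit_perp \<and> (\<forall>g\<in>unit_perp. quad_form N P w g \<le> quad_form N P w f))"

definition rayleigh_max :: real where
  "rayleigh_max = quad_form N P w rayleigh_maximizer"

lemma rayleigh_maximizer:
  "rayleigh_maximizer \<in> unit_perp" "\<And>g. g \<in> unit_perp \<Longrightarrow> quad_form N P w g \<le> rayleigh_max"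
proof -
  have "\<exists>f\<in>unit_perp. \<forall>g\<in>unit_perp. quad_form N P w g \<le> quad_form N P w f"
  proof (rule continuous_attains_sup[OF compact_unit_perp unit_perp_nonempty])
    show "continuous_on unit_perp (quad_form N P w)"
      unfolding quad_form_def inner_w_def kernel_apply_def
      by (intro continuous_intros continuous_on_subset[OF continuous_on_product_coordinates]
          subset_UNIV)
  qed
  then have "rayleigh_maximizer \<in> unit_perp \<and>
      (\<forall>g\<in>unit_perp. quad_form N P w g \<le> quad_form N P w rayleigh_maximizer)"
    unfolding rayleigh_maximizer_def Bex_def by (rule someI_ex)
  then show "rayleigh_maximizer \<in> unit_perp" "\<And>g. g \<in> unit_perp \<Longrightarrow> quad_form N P w g \<le> rayleigh_max"
    unfolding rayleigh_max_def by auto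
qed

lemma rayleigh_maximizer_perp:
  "inner_w N w rayleigh_maximizer (\<lambda>_. 1) = 0"
  "inner_w N w rayleigh_maximizer rayleigh_maximizer = 1"
  using rayleigh_maximizer(1) unfolding unit_perp_def by auto

lemma quad_form_le_rayleigh_max:
  assumes perp: "inner_w N w g (\<lambda>_. 1) = 0"
  shows "quad_form N P w g \<le> rayleigh_max * inner_w N w g g"
proof -
  define g' where "g' i = (if i < N then g i else 0)" for i
  have g': "\<And>i. i < N \<Longrightarrow> g' i = g i"
    unfolding g'_def by auto
  have Q: "quad_form N P w g' = quad_form N P w g"
    by (rule quad_form_cong[OF g'])
  have I: "inner_w N w g' g' = inner_w N w g g"
    by (rule inner_w_cong[OF g' g'])
  show ?thesis
  proof (cases "inner_w N w g g = 0")
    case True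
    then have "quad_form N P w g = quad_form N P w (\<lambda>_. 0)"
      using inner_w_self_eq_0_iff by (intro quad_form_cong) auto
    then show ?thesis
      using True by (simp add: quad_form_def inner_w_def)
  next
    case False
    then have pos: "0 < inner_w N w g' g'"
      using inner_w_self_nonneg[of g] I by simp
    have "inner_w N w g' (\<lambda>_. 1) = 0"
      using perp g' inner_w_cong[of N g' g "\<lambda>_. 1" "\<lambda>_. 1" w] by simp
    then have "quad_form N P w (\<lambda>i. (1 / sqrt (inner_w N w g' g')) * g' i) \<le> rayleigh_max"
      using pos by (intro rayleigh_maximizer(2) normalize_in_unit_perp) (auto simp: g'_def)
    then have "quad_form N P w g' / inner_w N w g' g' \<le> rayleigh_max"
      unfolding quad_form_scale using pos by (simp add: power_divide)
    then show ?thesis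
      using pos Q I by (simp add: divide_le_eq mult.commute)
  qed
qed

text \<open>Lagrange multipliers: perturbing the maximizer along any \<open>h \<bottom> 1\<close> cannot increase the
  Rayleigh quotient, so the first variation vanishes.\<close>

lemma rayleigh_maximizer_eigen:
  assumes "i < N"
  shows "kernel_apply N P rayleigh_maximizer i = rayleigh_max * rayleigh_maximizer i"
proof -
  let ?f = rayleigh_maximizer
  have first_variation: "inner_w N w (kernel_apply N P ?f) h = rayleigh_max * inner_w N w ?f h"
    if perp: "inner_w N w h (\<lambda>_. 1) = 0" for h
  proof -
    have "2 * (inner_w N w (kernel_apply N P ?f) h - rayleigh_max * inner_w N w ?f h) * t
        + (quad_form N P w h - rayleigh_max * inner_w N w h h) * t\<^sup>2 \<le> 0" for t
    proof -
      have "inner_w N w (\<lambda>i. ?f i + t * h i) (\<lambda>_. 1) = 0"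
        using rayleigh_maximizer_perp(1) perp unfolding inner_w_add_left inner_w_scale_left by simp
      from quad_form_le_rayleigh_max[OF this] show ?thesis
        unfolding quad_form_expand inner_w_expand rayleigh_maximizer_perp(2) rayleigh_max_def
        by (simp add: algebra_simps)
    qed
    from linear_coeff_eq_0_if_nonpos[OF this] show ?thesis
      by simp
  qed
  define h where "h = (\<lambda>i. kernel_apply N P ?f i - rayleigh_max * ?f i)"
  have "inner_w N w h (\<lambda>_. 1) = 0"
    unfolding h_def inner_w_diff_left inner_w_scale_left kernel_apply_perp_one
    using rayleigh_maximizer_perp(1) by simp
  then have "inner_w N w (kernel_apply N P ?f) h - rayleigh_max * inner_w N w ?f h = 0"
    using first_variation by simp
  also have "inner_w N w (kernel_apply N P ?f) h - rayleigh_max * inner_w N w ?f h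
      = inner_w N w h h"
    unfolding inner_w_diff_left[symmetric] inner_w_scale_left[symmetric] h_def ..
  finally show ?thesis
    using assms inner_w_self_eq_0_iff unfolding h_def by auto
qed

definition perp_eigenvalues :: "real set" where
  "perp_eigenvalues = {e. \<exists>g. (\<forall>i<N. kernel_apply N P g i = e * g i) \<and> (\<exists>i<N. g i \<noteq> 0)
      \<and> inner_w N w g (\<lambda>_. 1) = 0}"

lemma rayleigh_max_in_perp_eigenvalues: "rayleigh_max \<in> perp_eigenvalues"
  using rayleigh_maximizer_eigen rayleigh_maximizer_perp
    inner_w_self_eq_0_iff[of rayleigh_maximizer]
  unfolding perp_eigenvalues_def by auto

lemma perp_eigenvalue_le_rayleigh_max:
  assumes "e \<in> perp_eigenvalues"
  shows "e \<le> rayleigh_max"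
proof -
  obtain g i where eig: "\<And>i. i < N \<Longrightarrow> kernel_apply N P g i = e * g i"
    and i: "i < N" "g i \<noteq> 0" and perp: "inner_w N w g (\<lambda>_. 1) = 0"
    using assms unfolding perp_eigenvalues_def by blast
  have pos: "0 < inner_w N w g g"
    using inner_w_self_pos[of i g] i .
  have "quad_form N P w g = e * inner_w N w g g"
    unfolding quad_form_def inner_w_scale_right[symmetric]
    by (rule inner_w_cong) (simp_all add: eig)
  then show ?thesis
    using quad_form_le_rayleigh_max[OF perp] pos by simp
qed

lemma rayleigh_max_le_1: "rayleigh_max \<le> 1"
  using quad_form_le_inner_w[of rayleigh_maximizer] rayleigh_maximizer_perp
  unfolding rayleigh_max_def by simp

section \<open>The characteristic polynomial of a reversible kernel\<close>

lemma kernel_apply_diff_const: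
  "i < N \<Longrightarrow> kernel_apply N P (\<lambda>k. f k - c) i = kernel_apply N P f i - c"
  unfolding kernel_apply_def using row_sum
  by (simp add: right_diff_distrib sum_subtractf flip: sum_distrib_right)

lemma sum_states_split_first: "(\<Sum>j<N. h j) = h 0 + (\<Sum>j<N - 1. h (Suc j))"
proof -
  have "N = Suc (N - 1)"
    using two_le_N by simp
  then have "(\<Sum>j<N. h j) = (\<Sum>j<Suc (N - 1). h j)"
    by simp
  also have "\<dots> = h 0 + (\<Sum>j<N - 1. h (Suc j))"
    by (rule sum.lessThan_Suc_shift)
  finally show ?thesis .
qed

definition kernel_mat :: "real mat" where
  "kernel_mat = mat N N (\<lambda>(i, j). P i j)"

text \<open>In the basis obtained by replacing the first unit vector with the constant vector
  (fixed by \<open>P\<close>), the kernel becomes block upper triangular: the eigenvalue \<open>1\<close> splits off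
  and the other block is \<open>reduced_kernel_mat\<close>.\<close>

definition const_basis_mat :: "real mat" where
  "const_basis_mat = mat N N (\<lambda>(i, j). if j = 0 \<or> i = j then 1 else 0)"

definition const_basis_mat_inv :: "real mat" where
  "const_basis_mat_inv = mat N N (\<lambda>(i, j). if i = j then 1 else if j = 0 then -1 else 0)"

definition reduced_kernel_mat :: "real mat" where
  "reduced_kernel_mat = mat (N - 1) (N - 1) (\<lambda>(i, j). P (Suc i) (Suc j) - P 0 (Suc j))"

lemma mat_carriers:
  "kernel_mat \<in> carrier_mat N N" "const_basis_mat \<in> carrier_mat N N"
  "const_basis_mat_inv \<in> carrier_mat N N" "reduced_kernel_mat \<in> carrier_mat (N - 1) (N - 1)"
  unfolding kernel_mat_def const_basis_mat_def const_basis_mat_inv_def reduced_kernel_mat_def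
  by auto

lemma const_basis_mat_inverse:
  "const_basis_mat_inv * const_basis_mat = 1\<^sub>m N" "const_basis_mat * const_basis_mat_inv = 1\<^sub>m N"
proof -
  show inv: "const_basis_mat_inv * const_basis_mat = 1\<^sub>m N"
  proof (rule eq_matI)
    fix i j assume "i < dim_row (1\<^sub>m N :: real mat)" "j < dim_col (1\<^sub>m N :: real mat)"
    then have i: "i < N" and j: "j < N" by auto
    have "(const_basis_mat_inv * const_basis_mat) $$ (i, j)
        = (\<Sum>k<N. const_basis_mat_inv $$ (i, k) * const_basis_mat $$ (k, j))"
      using mat_carriers i j by (intro mat_mult_index_sum) auto
    also have "\<dots> = (\<Sum>k<N. (if k = i then (if j = 0 \<or> i = j then 1 else 0) else 0)
        - (if k = 0 \<and> i \<noteq> 0 then (if j = 0 then 1 else 0) else 0))"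
      using i j by (intro sum.cong) (auto simp: const_basis_mat_inv_def const_basis_mat_def)
    also have "\<dots> = (if j = 0 \<or> i = j then 1 else 0) - (if i \<noteq> 0 then (if j = 0 then 1 else 0) else 0)"
      using i j two_le_N by (simp add: sum_subtractf sum.delta)
    also have "\<dots> = 1\<^sub>m N $$ (i, j)"
      using i j by auto
    finally show "(const_basis_mat_inv * const_basis_mat) $$ (i, j) = 1\<^sub>m N $$ (i, j)" .
  qed (use mat_carriers in auto)
  show "const_basis_mat * const_basis_mat_inv = 1\<^sub>m N"
    by (rule mat_mult_left_right_inverse[OF mat_carriers(3,2) inv])
qed

lemma kernel_mat_similar_block:
  "similar_mat kernel_mat
    (four_block_mat (1\<^sub>m 1) (mat 1 (N - 1) (\<lambda>(_, j). P 0 (Suc j))) (0\<^sub>m (N - 1) 1) reduced_kernel_mat)"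
proof -
  define B where "B = four_block_mat (1\<^sub>m 1) (mat 1 (N - 1) (\<lambda>(_, j). P 0 (Suc j)))
    (0\<^sub>m (N - 1) 1) reduced_kernel_mat"
  have B: "B \<in> carrier_mat N N"
    using two_le_N by (auto simp: B_def reduced_kernel_mat_def)
  have B_entry: "B $$ (i, j) = (if j = 0 then (if i = 0 then 1 else 0)
      else if i = 0 then P 0 j else P i j - P 0 j)" if "i < N" "j < N" for i j
    using that two_le_N by (cases i; cases j) (auto simp: B_def reduced_kernel_mat_def)
  have KP: "kernel_mat * const_basis_mat = const_basis_mat * B"
  proof (rule eq_matI)
    fix i j assume "i < dim_row (const_basis_mat * B)" "j < dim_col (const_basis_mat * B)"
    then have i: "i < N" and j: "j < N"
      using mat_carriers B by auto
    have "(kernel_mat * const_basis_mat) $$ (i, j)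
        = (\<Sum>k<N. kernel_mat $$ (i, k) * const_basis_mat $$ (k, j))"
      using mat_carriers i j by (intro mat_mult_index_sum) auto
    also have "\<dots> = (\<Sum>k<N. if j = 0 then P i k else if k = j then P i k else 0)"
      using i j by (intro sum.cong) (auto simp: kernel_mat_def const_basis_mat_def)
    also have "\<dots> = (if j = 0 then 1 else P i j)"
      using j row_sum[OF i] by simp
    also have "\<dots> = B $$ (0, j) + (if i \<noteq> 0 then B $$ (i, j) else 0)"
      using i j two_le_N by (auto simp: B_entry)
    also have "\<dots> = (\<Sum>k<N. (if k = 0 then B $$ (0, j) else 0)
        + (if k = i \<and> i \<noteq> 0 then B $$ (i, j) else 0))"
      using i two_le_N by (simp add: sum.distrib)
    also have "\<dots> = (\<Sum>k<N. const_basis_mat $$ (i, k) * B $$ (k, j))"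
      using i by (intro sum.cong) (auto simp: const_basis_mat_def)
    also have "\<dots> = (const_basis_mat * B) $$ (i, j)"
      using mat_carriers B i j by (intro mat_mult_index_sum[symmetric]) auto
    finally show "(kernel_mat * const_basis_mat) $$ (i, j) = (const_basis_mat * B) $$ (i, j)" .
  qed (use mat_carriers B in auto)
  have "kernel_mat = kernel_mat * (const_basis_mat * const_basis_mat_inv)"
    using mat_carriers by (simp add: const_basis_mat_inverse)
  also have "\<dots> = kernel_mat * const_basis_mat * const_basis_mat_inv"
    by (rule assoc_mult_mat[OF mat_carriers(1-3), symmetric])
  also have "\<dots> = const_basis_mat * B * const_basis_mat_inv"
    unfolding KP ..
  finally have "similar_mat_wit kernel_mat B const_basis_mat const_basis_mat_inv"
    unfolding similar_mat_wit_def Let_def using mat_carriers B const_basis_mat_inverse by auto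
  then show ?thesis
    unfolding similar_mat_def B_def by blast
qed

lemma char_poly_kernel_mat: "char_poly kernel_mat = [:-1, 1:] * char_poly reduced_kernel_mat"
proof -
  have "char_poly kernel_mat = char_poly (1\<^sub>m 1 :: real mat) * char_poly reduced_kernel_mat"
    unfolding char_poly_similar[OF kernel_mat_similar_block]
    by (rule char_poly_four_block_zeros_col) (auto simp: reduced_kernel_mat_def)
  also have "char_poly (1\<^sub>m 1 :: real mat) = [:-1, 1:]"
    by (simp add: char_poly_defs det_def sign_def)
  finally show ?thesis .
qed

lemma reduced_kernel_mat_mult_vec:
  assumes "u 0 = 0" and "i < N - 1"
  shows "(reduced_kernel_mat *\<^sub>v vec (N - 1) (\<lambda>j. u (Suc j))) $ i
      = kernel_apply N P u (Suc i) - kernel_apply N P u 0"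
proof -
  have "(reduced_kernel_mat *\<^sub>v vec (N - 1) (\<lambda>j. u (Suc j))) $ i
      = (\<Sum>j<N - 1. (P (Suc i) (Suc j) - P 0 (Suc j)) * u (Suc j))"
    using assms(2) mat_carriers(4)
    by (subst mat_mult_vec_index_sum[of _ "N - 1" "N - 1"]) (auto simp: reduced_kernel_mat_def)
  also have "\<dots> = kernel_apply N P u (Suc i) - kernel_apply N P u 0"
    unfolding kernel_apply_def sum_states_split_first[of "\<lambda>j. P (Suc i) j * u j"]
      sum_states_split_first[of "\<lambda>j. P 0 j * u j"]
    using assms(1) by (simp add: left_diff_distrib sum_subtractf)
  finally show ?thesis .
qed

text \<open>An eigenvector of the reduced matrix lifts to a function \<open>u\<close> with \<open>P u = e u + r\<close> for a
  constant \<open>r\<close>; subtracting the weighted mean of \<open>u\<close> makes it an eigenvector orthogonal to the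
  constants.\<close>

lemma perp_eigenvalue_if_reduced_root:
  assumes "poly (char_poly reduced_kernel_mat) e = 0"
  shows "e \<in> perp_eigenvalues"
proof -
  have "eigenvalue reduced_kernel_mat e"
    using assms eigenvalue_root_char_poly[OF mat_carriers(4)] by simp
  then obtain v where v: "v \<in> carrier_vec (N - 1)" "v \<noteq> 0\<^sub>v (N - 1)"
    "reduced_kernel_mat *\<^sub>v v = e \<cdot>\<^sub>v v"
    unfolding eigenvalue_def eigenvector_def using mat_carriers(4) by auto
  define u where "u k = (if k = 0 then 0 else v $ (k - 1))" for k
  have v_eq: "v = vec (N - 1) (\<lambda>j. u (Suc j))"
    using v(1) by (auto simp: u_def)
  define r where "r = kernel_apply N P u 0"
  have u_eig: "kernel_apply N P u k = e * u k + r" if "k < N" for k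
  proof (cases k)
    case (Suc i)
    then have "kernel_apply N P u k - r = (reduced_kernel_mat *\<^sub>v v) $ i"
      using that unfolding r_def v_eq by (subst reduced_kernel_mat_mult_vec) (auto simp: u_def)
    also have "\<dots> = e * u k"
      using v(1,3) that Suc by (simp add: u_def)
    finally show ?thesis by simp
  qed (simp add: r_def u_def)
  define c where "c = inner_w N w u (\<lambda>_. 1) / inner_w N w (\<lambda>_. 1) (\<lambda>_. 1)"
  have "inner_w N w (kernel_apply N P u) (\<lambda>_. 1) = inner_w N w (\<lambda>k. e * u k + r * 1) (\<lambda>_. 1)"
    by (rule inner_w_cong) (simp_all add: u_eig)
  then have "inner_w N w u (\<lambda>_. 1) = inner_w N w (\<lambda>k. e * u k + r * 1) (\<lambda>_. 1)"
    unfolding kernel_apply_perp_one .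
  then have "r * inner_w N w (\<lambda>_. 1) (\<lambda>_. 1) = (1 - e) * inner_w N w u (\<lambda>_. 1)"
    unfolding inner_w_add_left inner_w_scale_left left_diff_distrib mult_1_left by linarith
  then have r: "r = (1 - e) * c"
    unfolding c_def using inner_w_one_one_pos by (simp add: field_simps)
  define f where "f k = u k - c" for k
  have "kernel_apply N P f k = e * f k" if "k < N" for k
    unfolding f_def kernel_apply_diff_const[OF that] u_eig[OF that] r by (simp add: algebra_simps)
  moreover have "inner_w N w f (\<lambda>_. 1) = 0"
    unfolding f_def inner_w_diff_left c_def
    using inner_w_scale_left[of N w "inner_w N w u (\<lambda>_. 1) / inner_w N w (\<lambda>_. 1) (\<lambda>_. 1)" "\<lambda>_. 1"]
      inner_w_one_one_pos
    by simp
  moreover have "\<exists>i<N. f i \<noteq> 0"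
  proof (rule ccontr)
    assume "\<not> (\<exists>i<N. f i \<noteq> 0)"
    then have u_const: "u k = c" if "k < N" for k
      using that unfolding f_def by auto
    then have "c = 0"
      using u_const[of 0] two_le_N by (simp add: u_def)
    then have "v $ j = 0" if "j < N - 1" for j
      using u_const[of "Suc j"] that by (simp add: u_def)
    then show False
      using v(1,2) by (auto intro: eq_vecI)
  qed
  ultimately show ?thesis
    unfolding perp_eigenvalues_def by blast
qed

lemma reduced_root_if_perp_eigenvalue:
  assumes "e \<in> perp_eigenvalues"
  shows "poly (char_poly reduced_kernel_mat) e = 0"
proof -
  obtain g where g_eig: "\<And>i. i < N \<Longrightarrow> kernel_apply N P g i = e * g i"
    and g_ne: "\<exists>i<N. g i \<noteq> 0" and g_perp: "inner_w N w g (\<lambda>_. 1) = 0"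
    using assms unfolding perp_eigenvalues_def by blast
  define z where "z = vec (N - 1) (\<lambda>j. g (Suc j) - g 0)"
  have "reduced_kernel_mat *\<^sub>v z = e \<cdot>\<^sub>v z"
  proof (rule eq_vecI)
    fix i assume "i < dim_vec (e \<cdot>\<^sub>v z)"
    then have i: "i < N - 1"
      unfolding z_def by simp
    have "(reduced_kernel_mat *\<^sub>v z) $ i
        = kernel_apply N P (\<lambda>k. g k - g 0) (Suc i) - kernel_apply N P (\<lambda>k. g k - g 0) 0"
      unfolding z_def using reduced_kernel_mat_mult_vec[of "\<lambda>k. g k - g 0" i] i by simp
    also have "\<dots> = e * (g (Suc i) - g 0)"
      using i two_le_N by (simp add: kernel_apply_diff_const g_eig algebra_simps)
    finally show "(reduced_kernel_mat *\<^sub>v z) $ i = (e \<cdot>\<^sub>v z) $ i"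
      using i by (simp add: z_def)
  qed (use mat_carriers(4) in \<open>simp add: z_def\<close>)
  moreover have "z \<noteq> 0\<^sub>v (N - 1)"
  proof
    assume z0: "z = 0\<^sub>v (N - 1)"
    have "g (Suc j) = g 0" if "j < N - 1" for j
    proof -
      have "z $ j = 0"
        using z0 that by simp
      then show ?thesis
        using that by (simp add: z_def)
    qed
    then have const: "g i = g 0" if "i < N" for i
      using that by (cases i) auto
    have "g 0 * inner_w N w (\<lambda>_. 1) (\<lambda>_. 1) = inner_w N w g (\<lambda>_. 1)"
      unfolding inner_w_scale_left[symmetric] by (rule inner_w_cong) (auto intro: const[symmetric])
    then have "g 0 = 0"
      using g_perp inner_w_one_one_pos by simp
    moreover obtain i where "i < N" "g i \<noteq> 0"
      using g_ne by blast
    ultimately show False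
      using const[of i] by simp
  qed
  moreover have "z \<in> carrier_vec (N - 1)"
    by (simp add: z_def)
  ultimately have "eigenvalue reduced_kernel_mat e"
    unfolding eigenvalue_def eigenvector_def using mat_carriers(4) by auto
  then show ?thesis
    using eigenvalue_root_char_poly[OF mat_carriers(4)] by simp
qed

text \<open>Detailed balance makes \<open>P\<close> self-adjoint for the weighted inner product, so the Hermitian
  form \<open>\<Sum>i j. w i P i j conj (v i) v j\<close> is real; it equals \<open>z\<close> times the positive real
  \<open>\<Sum>i. w i |v i|\<^sup>2\<close>.\<close>

lemma complex_eigenvalue_real:
  assumes ev: "eigenvector (map_mat complex_of_real kernel_mat) v z"
  shows "Im z = 0"
proof -
  let ?Ac = "map_mat complex_of_real kernel_mat"
  have v: "v \<in> carrier_vec N" "v \<noteq> 0\<^sub>v N" "?Ac *\<^sub>v v = z \<cdot>\<^sub>v v"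
    using ev mat_carriers(1) unfolding eigenvector_def by auto
  have comp: "(\<Sum>j<N. complex_of_real (P i j) * v $ j) = z * v $ i" if i: "i < N" for i
  proof -
    have "(?Ac *\<^sub>v v) $ i = row ?Ac i \<bullet> v" using i mat_carriers by simp
    also have "\<dots> = (\<Sum>k\<in>{0..<N}. row ?Ac i $ k * v $ k)" unfolding scalar_prod_def using v by simp
    also have "\<dots> = (\<Sum>j<N. complex_of_real (P i j) * v $ j)"
      using i by (auto simp: atLeast0LessThan kernel_mat_def intro!: sum.cong)
    finally show ?thesis using v(3) i v(1) by simp
  qed
  define S where "S = (\<Sum>i<N. \<Sum>j<N. complex_of_real (w i * P i j) * (cnj (v $ i) * v $ j))"
  define D where "D = (\<Sum>i<N. complex_of_real (w i) * (cnj (v $ i) * v $ i))"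
  have "S = (\<Sum>i<N. complex_of_real (w i) * cnj (v $ i) * (\<Sum>j<N. complex_of_real (P i j) * v $ j))"
    unfolding S_def by (simp add: sum_distrib_left mult_ac)
  also have "\<dots> = (\<Sum>i<N. complex_of_real (w i) * cnj (v $ i) * (z * v $ i))"
    by (intro sum.cong refl) (simp add: comp)
  also have "\<dots> = z * D" unfolding D_def by (simp add: sum_distrib_left mult_ac)
  finally have SD: "S = z * D" .
  have "cnj S = (\<Sum>i<N. \<Sum>j<N. complex_of_real (w i * P i j) * (v $ i * cnj (v $ j)))"
    unfolding S_def by (simp add: cnj_sum mult_ac)
  also have "\<dots> = (\<Sum>j<N. \<Sum>i<N. complex_of_real (w i * P i j) * (v $ i * cnj (v $ j)))"
    by (rule sum.swap)
  also have "\<dots> = (\<Sum>j<N. \<Sum>i<N. complex_of_real (w j * P j i) * (cnj (v $ j) * v $ i))"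
    by (intro sum.cong refl) (simp add: detailed_balance mult_ac)
  also have "\<dots> = S" unfolding S_def ..
  finally have "cnj S = S" .
  then have ImS: "Im S = 0" by (simp add: complex_eq_iff)
  define Dr where "Dr = (\<Sum>i<N. w i * (cmod (v $ i))^2)"
  have cn: "cnj z * z = complex_of_real ((cmod z)^2)" for z
    by (subst complex_norm_square) (simp add: mult.commute)
  have "D = (\<Sum>i<N. complex_of_real (w i) * complex_of_real ((cmod (v $ i))^2))"
    unfolding D_def by (simp only: cn)
  also have "\<dots> = complex_of_real Dr" unfolding Dr_def by (simp only: of_real_sum of_real_mult)
  finally have DDr: "D = complex_of_real Dr" .
  obtain i where i: "i < N" "v $ i \<noteq> 0"
    using v(1,2) by (metis eq_vecI carrier_vecD index_zero_vec(1,2))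
  have "w i * (cmod (v $ i))^2 \<le> Dr" unfolding Dr_def
    using i by (intro member_le_sum) (auto intro: mult_nonneg_nonneg weight_nonneg)
  moreover have "0 < w i * (cmod (v $ i))^2" using i weight_pos by simp
  ultimately have "Dr \<noteq> 0" by simp
  have "Im S = Im z * Dr" unfolding SD DDr by simp
  then show ?thesis using ImS \<open>Dr \<noteq> 0\<close> by simp
qed

lemma char_poly_kernel_mat_real_split:
  "\<exists>es. sorted_wrt (\<ge>) es \<and> char_poly kernel_mat = (\<Prod>e\<leftarrow>es. [:-e, 1:])"
proof -
  interpret map_poly_inj_comm_ring_hom complex_of_real ..
  let ?Ac = "map_mat complex_of_real kernel_mat"
  have Ac: "?Ac \<in> carrier_mat N N"
    using mat_carriers by simp
  obtain zs where zs: "char_poly ?Ac = (\<Prod>z\<leftarrow>zs. [:-z, 1:])"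
    using char_poly_factorized[OF Ac] by blast
  have real: "Im z = 0" if "z \<in> set zs" for z
  proof -
    have "eigenvalue ?Ac z"
      using that eigenvalue_root_char_poly[OF Ac] unfolding zs poly_linear_factors_eq_0_iff by simp
    then obtain v where "eigenvector ?Ac v z"
      unfolding eigenvalue_def by blast
    then show ?thesis
      by (rule complex_eigenvalue_real)
  qed
  define es where "es = rev (sort (map Re zs))"
  have "map_poly complex_of_real (char_poly kernel_mat) = (\<Prod>z\<leftarrow>zs. [:-z, 1:])"
    unfolding zs[symmetric] by (rule of_real_hom.char_poly_hom[OF mat_carriers(1), symmetric])
  also have "\<dots> = map_poly complex_of_real (\<Prod>e\<leftarrow>map Re zs. [:-e, 1:])"
    using real by (induction zs) (auto simp: hom_distribs complex_eq_iff)
  also have "(\<Prod>e\<leftarrow>map Re zs. [:-e, 1:]) = (\<Prod>e\<leftarrow>es. [:-e, 1:])"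
  proof -
    have "mset (map (\<lambda>e. [:-e, 1:]) (map Re zs)) = mset (map (\<lambda>e. [:-e, 1:]) es)"
      unfolding es_def by (simp only: mset_map mset_rev mset_sort)
    then show ?thesis
      unfolding prod_mset_prod_list[symmetric] by simp
  qed
  finally have "char_poly kernel_mat = (\<Prod>e\<leftarrow>es. [:-e, 1:])"
    by (rule injectivity)
  moreover have "sorted_wrt (\<ge>) es"
    unfolding es_def by (simp add: sorted_wrt_rev)
  ultimately show ?thesis
    by blast
qed

lemma sorted_char_roots_nth_1:
  assumes s: "sorted_wrt (\<ge>) es" and cp: "char_poly kernel_mat = (\<Prod>e\<leftarrow>es. [:-e, 1:])"
  shows "es ! 1 = rayleigh_max"
proof -
  have len: "length es = N"
    using degree_monic_char_poly[OF mat_carriers(1)] cp degree_linear_factors[of uminus es] by simp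
  have "poly (char_poly kernel_mat) 1 = 0" unfolding char_poly_kernel_mat by simp
  then have one_in: "1 \<in> set es" using cp poly_linear_factors_eq_0_iff by metis
  have "[:-1, 1:] * char_poly reduced_kernel_mat
      = [:-1, 1:] * (\<Prod>e\<leftarrow>remove1 1 es. [:-e, 1:])"
    using cp char_poly_kernel_mat prod_list_map_remove1[OF one_in, of "\<lambda>e. [:-e, 1:]"] by simp
  moreover have "[:-1, 1:] \<noteq> (0 :: real poly)"
    by simp
  ultimately have cpC: "char_poly reduced_kernel_mat = (\<Prod>e\<leftarrow>remove1 1 es. [:-e, 1:])"
    using mult_left_cancel by blast
  have setC: "set (remove1 1 es) = perp_eigenvalues"
    using perp_eigenvalue_if_reduced_root reduced_root_if_perp_eigenvalue
    unfolding cpC poly_linear_factors_eq_0_iff by blast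
  have le1: "e \<le> 1" if "e \<in> set es" for e
  proof (cases "e = 1")
    case False
    then have "e \<in> set (remove1 1 es)" using that by (simp add: in_set_remove1)
    then show ?thesis using setC perp_eigenvalue_le_rayleigh_max rayleigh_max_le_1 by force
  qed simp
  obtain x xs where es: "es = x # xs" using len two_le_N by (cases es) auto
  have "x = 1"
  proof -
    have "x \<le> 1" using le1 es by simp
    moreover have "1 \<le> x" using one_in s es by auto
    ultimately show ?thesis by simp
  qed
  then have "remove1 1 es = xs" using es by simp
  then have setxs: "set xs = perp_eigenvalues" using setC by simp
  obtain y ys where xs: "xs = y # ys" using len two_le_N es by (cases xs) auto
  have "y \<le> rayleigh_max" using setxs xs perp_eigenvalue_le_rayleigh_max by auto
  moreover have "rayleigh_max \<le> y"
  proof -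
    have "rayleigh_max \<in> set xs" using setxs rayleigh_max_in_perp_eigenvalues by simp
    then show ?thesis using s es xs by auto
  qed
  ultimately show ?thesis using es xs by simp
qed

end

section \<open>Comparison of reversible chains\<close>

lemma dirichlet_form_mono:
  assumes "\<And>i. i < N \<Longrightarrow> 0 \<le> w i" and "0 \<le> c"
    and "\<And>i j. i < N \<Longrightarrow> j < N \<Longrightarrow> i \<noteq> j \<Longrightarrow> c * Q i j \<le> P i j"
  shows "c * dirichlet_form N Q w f \<le> dirichlet_form N P w f"
proof -
  have "c * (w i * Q i j * (f i - f j)\<^sup>2) \<le> w i * P i j * (f i - f j)\<^sup>2" if "i < N" "j < N" for i j
  proof (cases "i = j")
    case False
    then have "c * Q i j * (w i * (f i - f j)\<^sup>2) \<le> P i j * (w i * (f i - f j)\<^sup>2)"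
      using assms that by (intro mult_right_mono) auto
    then show ?thesis
      by (simp add: mult_ac)
  qed simp
  then have "(\<Sum>i<N. \<Sum>j<N. c * (w i * Q i j * (f i - f j)\<^sup>2))
      \<le> (\<Sum>i<N. \<Sum>j<N. w i * P i j * (f i - f j)\<^sup>2)"
    by (intro sum_mono) auto
  then show ?thesis
    unfolding dirichlet_form_def by (simp add: sum_distrib_left)
qed

text \<open>The Rayleigh maximizer of \<open>P\<close> is a competitor in the variational problem for \<open>Q\<close>.\<close>

lemma rayleigh_max_comparison:
  assumes P: "reversible_kernel N P w" and Q: "reversible_kernel N Q w" and "0 \<le> c"
    and le: "\<And>i j. i < N \<Longrightarrow> j < N \<Longrightarrow> i \<noteq> j \<Longrightarrow> c * Q i j \<le> P i j"
  shows "c * (1 - reversible_kernel.rayleigh_max N Q w) \<le> 1 - reversible_kernel.rayleigh_max N P w"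
proof -
  interpret P: reversible_kernel N P w by (rule P)
  interpret Q: reversible_kernel N Q w by (rule Q)
  let ?f = P.rayleigh_maximizer
  have "c * (1 - Q.rayleigh_max) \<le> c * (1 - quad_form N Q w ?f)"
    using Q.quad_form_le_rayleigh_max[OF P.rayleigh_maximizer_perp(1)] P.rayleigh_maximizer_perp(2)
      \<open>0 \<le> c\<close> by (intro mult_left_mono) auto
  also have "\<dots> = c * dirichlet_form N Q w ?f"
    using Q.dirichlet_form_eq[of ?f] P.rayleigh_maximizer_perp(2) by simp
  also have "\<dots> \<le> dirichlet_form N P w ?f"
    by (rule dirichlet_form_mono[OF P.weight_nonneg \<open>0 \<le> c\<close> le])
  also have "\<dots> = 1 - P.rayleigh_max"
    using P.dirichlet_form_eq[of ?f] P.rayleigh_maximizer_perp(2)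
    unfolding P.rayleigh_max_def by simp
  finally show ?thesis .
qed

definition reversible_chain :: "'s set \<Rightarrow> ('s \<Rightarrow> real) \<Rightarrow> ('s \<Rightarrow> 's \<Rightarrow> real) \<Rightarrow> bool" where
  "reversible_chain S w K \<longleftrightarrow> finite S \<and> 2 \<le> card S \<and> (\<forall>x\<in>S. 0 < w x)
    \<and> (\<forall>x\<in>S. \<forall>y\<in>S. w x * K x y = w y * K y x) \<and> (\<forall>x\<in>S. (\<Sum>y\<in>S. K x y) = 1)
    \<and> (\<forall>x\<in>S. \<forall>y\<in>S. x \<noteq> y \<longrightarrow> 0 \<le> K x y)"

definition index_kernel :: "'s set \<Rightarrow> ('s \<Rightarrow> 's \<Rightarrow> real) \<Rightarrow> nat \<Rightarrow> nat \<Rightarrow> real" where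
  "index_kernel S K i j = K (enum_states S ! i) (enum_states S ! j)"

definition index_weight :: "'s set \<Rightarrow> ('s \<Rightarrow> real) \<Rightarrow> nat \<Rightarrow> real" where
  "index_weight S w i = w (enum_states S ! i)"

lemma enum_states_spec:
  assumes "finite S"
  shows "distinct (enum_states S)" "set (enum_states S) = S" "length (enum_states S) = card S"
proof -
  have "\<exists>xs. distinct xs \<and> set xs = S"
    using finite_distinct_list[OF assms] by blast
  then have "distinct (enum_states S) \<and> set (enum_states S) = S"
    unfolding enum_states_def by (rule someI_ex)
  then show "distinct (enum_states S)" "set (enum_states S) = S" "length (enum_states S) = card S"
    using distinct_card by fastforce+
qed

lemma reversible_kernel_index:
  assumes "reversible_chain S w K"
  shows "reversible_kernel (card S) (index_kernel S K) (index_weight S w)"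
proof -
  have fin: "finite S"
    using assms unfolding reversible_chain_def by blast
  note xs = enum_states_spec[OF fin]
  have mem: "i < card S \<Longrightarrow> enum_states S ! i \<in> S" for i
    using xs by (metis nth_mem)
  have bij: "bij_betw ((!) (enum_states S)) {..<card S} S"
    using xs by (metis bij_betw_nth lessThan_atLeast0)
  show ?thesis
  proof
    show "(\<Sum>j<card S. index_kernel S K i j) = 1" if "i < card S" for i
      using assms mem[OF that] unfolding reversible_chain_def index_kernel_def
      by (simp add: sum.reindex_bij_betw[OF bij, of "K (enum_states S ! i)"])
    show "\<And>i j. i < card S \<Longrightarrow> j < card S \<Longrightarrow> i \<noteq> j \<Longrightarrow> 0 \<le> index_kernel S K i j"
      using assms mem xs unfolding reversible_chain_def index_kernel_def
      by (simp add: nth_eq_iff_index_eq)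
  qed (use assms mem in \<open>auto simp: reversible_chain_def index_kernel_def index_weight_def\<close>)
qed

lemma spectral_gap_eq_rayleigh_max:
  assumes "reversible_chain S w K"
  shows "spectral_gap S K
    = 1 - reversible_kernel.rayleigh_max (card S) (index_kernel S K) (index_weight S w)"
proof -
  interpret reversible_kernel "card S" "index_kernel S K" "index_weight S w"
    using reversible_kernel_index[OF assms] .
  have "finite S"
    using assms unfolding reversible_chain_def by blast
  then have "trans_mat S K = kernel_mat"
    unfolding trans_mat_def kernel_mat_def index_kernel_def Let_def by (simp add: enum_states_spec)
  moreover have "\<exists>es. sorted_wrt (\<ge>) es \<and> char_poly kernel_mat = (\<Prod>e\<leftarrow>es. [:-e, 1:])"
    by (rule char_poly_kernel_mat_real_split)
  then have "sorted_wrt (\<ge>) (eigenvalues_desc kernel_mat) \<and>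
      char_poly kernel_mat = (\<Prod>e\<leftarrow>eigenvalues_desc kernel_mat. [:-e, 1:])"
    unfolding eigenvalues_desc_def by (rule someI_ex)
  ultimately show ?thesis
    unfolding spectral_gap_def second_eigenvalue_def using sorted_char_roots_nth_1 by auto
qed

lemma spectral_gap_nonneg: "reversible_chain S w K \<Longrightarrow> 0 \<le> spectral_gap S K"
  using reversible_kernel.rayleigh_max_le_1[OF reversible_kernel_index] spectral_gap_eq_rayleigh_max
  by fastforce

lemma relaxation_time_nonneg: "reversible_chain S w K \<Longrightarrow> 0 \<le> relaxation_time S K"
  unfolding relaxation_time_def using spectral_gap_nonneg by simp

lemma spectral_gap_comparison:
  assumes K: "reversible_chain S w K" and L: "reversible_chain S w L" and "0 \<le> c"
    and le: "\<And>x y. x \<in> S \<Longrightarrow> y \<in> S \<Longrightarrow> x \<noteq> y \<Longrightarrow> c * L x y \<le> K x y"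
  shows "c * spectral_gap S L \<le> spectral_gap S K"
proof -
  have "finite S"
    using K unfolding reversible_chain_def by blast
  note xs = enum_states_spec[OF this]
  have "c * index_kernel S L i j \<le> index_kernel S K i j"
    if "i < card S" "j < card S" "i \<noteq> j" for i j
  proof -
    have "enum_states S ! i \<in> S" "enum_states S ! j \<in> S"
      using that xs nth_mem[of _ "enum_states S"] by auto
    moreover have "enum_states S ! i \<noteq> enum_states S ! j"
      using that xs by (simp add: nth_eq_iff_index_eq)
    ultimately show ?thesis
      unfolding index_kernel_def by (rule le)
  qed
  then show ?thesis
    unfolding spectral_gap_eq_rayleigh_max[OF K] spectral_gap_eq_rayleigh_max[OF L]
    by (intro rayleigh_max_comparison reversible_kernel_index K L \<open>0 \<le> c\<close>)
qed

text \<open>Two-sided comparison forces the gaps to vanish together, so the junk value \<open>1 / 0 = 0\<close> of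
  the relaxation time of a reducible chain causes no trouble.\<close>

lemma relaxation_time_comparison:
  assumes K: "reversible_chain S w K" and L: "reversible_chain S w L" and "0 < c" "0 < C"
    and lower: "\<And>x y. x \<in> S \<Longrightarrow> y \<in> S \<Longrightarrow> x \<noteq> y \<Longrightarrow> c * L x y \<le> K x y"
    and upper: "\<And>x y. x \<in> S \<Longrightarrow> y \<in> S \<Longrightarrow> x \<noteq> y \<Longrightarrow> K x y \<le> C * L x y"
  shows "c * relaxation_time S K \<le> relaxation_time S L"
    and "relaxation_time S L \<le> C * relaxation_time S K"
proof -
  have "inverse C * K x y \<le> L x y" if "x \<in> S" "y \<in> S" "x \<noteq> y" for x y
    using upper[OF that] \<open>0 < C\<close> by (simp add: field_simps)
  then have gK: "spectral_gap S K \<le> C * spectral_gap S L"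
    using spectral_gap_comparison[OF L K, of "inverse C"] \<open>0 < C\<close> by (simp add: field_simps)
  have gL: "c * spectral_gap S L \<le> spectral_gap S K"
    using spectral_gap_comparison[OF K L] \<open>0 < c\<close> lower by simp
  have "0 \<le> spectral_gap S K" "0 \<le> spectral_gap S L"
    using spectral_gap_nonneg K L by blast+
  moreover have "spectral_gap S K = 0 \<longleftrightarrow> spectral_gap S L = 0"
    using gK gL \<open>0 < c\<close> \<open>0 < C\<close> calculation by (auto simp: mult_le_0_iff)
  ultimately show "c * relaxation_time S K \<le> relaxation_time S L"
    and "relaxation_time S L \<le> C * relaxation_time S K"
    using gK gL \<open>0 < c\<close> \<open>0 < C\<close> unfolding relaxation_time_def
    by (cases "spectral_gap S K = 0"; simp add: field_simps)+
qed

lemma reversible_chain_kernel_of: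
  assumes "finite S" "2 \<le> card S" "\<And>x. x \<in> S \<Longrightarrow> 0 < w x"
    and "\<And>x y. x \<in> S \<Longrightarrow> y \<in> S \<Longrightarrow> x \<noteq> y \<Longrightarrow> 0 \<le> Q x y"
    and "\<And>x y. x \<in> S \<Longrightarrow> y \<in> S \<Longrightarrow> x \<noteq> y \<Longrightarrow> w x * Q x y = w y * Q y x"
  shows "reversible_chain S w (kernel_of S Q)"
proof -
  have "(\<Sum>y\<in>S. kernel_of S Q x y) = 1" if "x \<in> S" for x
  proof -
    have "(\<Sum>y\<in>S. kernel_of S Q x y) = kernel_of S Q x x + (\<Sum>y\<in>S - {x}. kernel_of S Q x y)"
      by (rule sum.remove[OF \<open>finite S\<close> that])
    also have "(\<Sum>y\<in>S - {x}. kernel_of S Q x y) = (\<Sum>y\<in>S - {x}. Q x y)"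
      by (intro sum.cong) (auto simp: kernel_of_def)
    finally show ?thesis
      by (simp add: kernel_of_def)
  qed
  then show ?thesis
    using assms unfolding reversible_chain_def by (auto simp: kernel_of_def)
qed

section \<open>Contingency tables and moves\<close>

lemma tables_outside: "x \<in> tables lam mu \<Longrightarrow> length lam \<le> i \<or> length mu \<le> j \<Longrightarrow> x i j = 0"
  unfolding tables_def by auto

lemma tables_row_sum: "x \<in> tables lam mu \<Longrightarrow> i < length lam \<Longrightarrow> (\<Sum>j<length mu. x i j) = lam ! i"
  unfolding tables_def by auto

lemma tables_col_sum: "x \<in> tables lam mu \<Longrightarrow> j < length mu \<Longrightarrow> (\<Sum>i<length lam. x i j) = mu ! j"
  unfolding tables_def by auto

lemma tables_entry_le_row:
  assumes "x \<in> tables lam mu" "i < length lam"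
  shows "x i j \<le> lam ! i"
proof (cases "j < length mu")
  case True
  then have "x i j \<le> (\<Sum>j<length mu. x i j)"
    by (intro member_le_sum) auto
  then show ?thesis
    using tables_row_sum[OF assms] by simp
qed (use tables_outside[OF assms(1)] in simp)

lemma tables_entry_le_sum: "x \<in> tables lam mu \<Longrightarrow> x i j \<le> sum_list lam"
  using tables_entry_le_row[of x lam mu i j] elem_le_sum_list[of i lam] tables_outside[of x lam mu i j]
  by (cases "i < length lam") auto

lemma finite_tables: "finite (tables lam mu)"
proof -
  define R where "R = {..<length lam} \<times> {..<length mu}"
  define restr where "restr x = restrict (\<lambda>(i, j). x i j) R" for x :: table
  have "inj_on restr (tables lam mu)"
  proof (rule inj_onI)
    fix x y assume "x \<in> tables lam mu" "y \<in> tables lam mu" "restr x = restr y"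
    show "x = y"
    proof (intro ext)
      fix i j
      show "x i j = y i j"
      proof (cases "(i, j) \<in> R")
        case True
        then show ?thesis
          using fun_cong[OF \<open>restr x = restr y\<close>, of "(i, j)"] unfolding restr_def by simp
      next
        case False
        then show ?thesis
          using tables_outside \<open>x \<in> tables lam mu\<close> \<open>y \<in> tables lam mu\<close>
          unfolding R_def by (metis SigmaI lessThan_iff not_le)
      qed
    qed
  qed
  moreover have "restr ` tables lam mu \<subseteq> PiE R (\<lambda>_. {..sum_list lam})"
    unfolding restr_def using tables_entry_le_sum by (auto simp: restrict_PiE_iff)
  then have "finite (restr ` tables lam mu)"
    by (rule finite_subset) (auto simp: R_def intro!: finite_PiE)
  ultimately show ?thesis
    using finite_imageD by blast
qed

lemma is_move_quads:
  assumes "is_move I J (i1, j1, i2, j2) x y"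
  shows "i1 < I" "i2 < I" "j1 < J" "j2 < J" "i1 \<noteq> i2" "j1 \<noteq> j2"
  using assms unfolding is_move_def quads_def by auto

lemma is_move_Fmove: "is_move I J q x y \<Longrightarrow> int (y i j) = Fmove q x i j"
  unfolding is_move_def by (metis (mono_tags, lifting))

lemma is_move_entries:
  assumes m: "is_move I J (i1, j1, i2, j2) x y"
  shows "x i1 j1 = Suc (y i1 j1)" "x i2 j2 = Suc (y i2 j2)"
    and "y i1 j2 = Suc (x i1 j2)" "y i2 j1 = Suc (x i2 j1)"
    and "(i, j) \<notin> {(i1, j1), (i2, j2), (i1, j2), (i2, j1)} \<Longrightarrow> y i j = x i j"
  using is_move_Fmove[OF m, of i1 j1] is_move_Fmove[OF m, of i2 j2] is_move_Fmove[OF m, of i1 j2]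
    is_move_Fmove[OF m, of i2 j1] is_move_Fmove[OF m, of i j] is_move_quads(5,6)[OF m]
  unfolding Fmove_def by auto

lemma is_move_ne: "is_move I J (i1, j1, i2, j2) x y \<Longrightarrow> y \<noteq> x"
  using is_move_entries(1) by fastforce

lemma is_move_reverse:
  assumes m: "is_move I J (i1, j1, i2, j2) x y"
  shows "is_move I J (i1, j2, i2, j1) y x"
proof -
  note d = is_move_quads[OF m]
  have "(\<lambda>i j. int (x i j)) = Fmove (i1, j2, i2, j1) y"
  proof (intro ext)
    fix i j
    show "int (x i j) = Fmove (i1, j2, i2, j1) y i j"
      using is_move_Fmove[OF m, of i j] d unfolding Fmove_def by auto
  qed
  then show ?thesis
    using d unfolding is_move_def quads_def by simp
qed

lemma ex_is_move_sym: "(\<exists>q. is_move I J q x y) \<longleftrightarrow> (\<exists>q. is_move I J q y x)"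
  by (metis is_move_reverse prod_cases4)

text \<open>A move determines its two decreased cells up to order, so the \<open>SOME\<close> in \<^const>\<open>PFY_off\<close>
  yields a well-defined rate.\<close>

lemma is_move_same_product:
  assumes m: "is_move I J (i1, j1, i2, j2) x y" and m': "is_move I J (k1, l1, k2, l2) x y"
  shows "x k1 l1 * x k2 l2 = x i1 j1 * x i2 j2"
proof -
  have decreased: "(k, l) = (i1, j1) \<or> (k, l) = (i2, j2)" if "x k l = Suc (y k l)" for k l
    using is_move_Fmove[OF m, of k l] that is_move_quads(5,6)[OF m]
    unfolding Fmove_def by (auto split: if_splits)
  show ?thesis
    using decreased[OF is_move_entries(1)[OF m']] decreased[OF is_move_entries(2)[OF m']]
      is_move_quads(5)[OF m'] by auto
qed

lemma PFY_off_move: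
  assumes m: "is_move (length lam) (length mu) (i1, j1, i2, j2) x y"
  shows "PFY_off lam mu x y = 2 * real (x i1 j1) * real (x i2 j2) / real (sum_list lam) ^ 2"
proof -
  let ?P = "\<lambda>q. is_move (length lam) (length mu) q x y"
  obtain k1 l1 k2 l2 where q: "(SOME q. ?P q) = (k1, l1, k2, l2)"
    by (metis prod_cases4)
  have "?P (k1, l1, k2, l2)"
    using someI[of ?P, OF m] unfolding q .
  then have "real (x k1 l1) * real (x k2 l2) = real (x i1 j1) * real (x i2 j2)"
    using is_move_same_product[OF m] by (metis of_nat_mult)
  then show ?thesis
    unfolding PFY_off_def using m is_move_ne[OF m] q by (auto simp: mult.assoc)
qed

lemma PU_off_sym: "PU_off lam mu x y = PU_off lam mu y x" if "x \<in> tables lam mu" "y \<in> tables lam mu"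
  unfolding PU_off_def using ex_is_move_sym that by metis

lemma piFY_pos: "0 < piFY lam mu x"
  unfolding piFY_def by (intro divide_pos_pos mult_pos_pos prod_pos) auto

text \<open>Each changed cell moves by one, so cellwise \<open>x! \<cdot> (y-factor) = y! \<cdot> (x-factor)\<close>, where the
  factors are the entries of the two increased cells of \<open>y\<close> and the two decreased cells of \<open>x\<close>.\<close>

lemma piFY_move_balance:
  assumes m: "is_move (length lam) (length mu) (i1, j1, i2, j2) x y"
  shows "piFY lam mu x * (real (x i1 j1) * real (x i2 j2))
    = piFY lam mu y * (real (y i1 j2) * real (y i2 j1))"
proof -
  note d = is_move_quads[OF m] and e = is_move_entries[OF m]
  define R where "R = {..<length lam} \<times> {..<length mu}"
  define F where "F z = (\<Prod>c\<in>R. fact (z (fst c) (snd c)) :: real)" for z :: table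
  define rx where "rx c = (if c = (i1, j1) then real (x i1 j1) else 1)
    * (if c = (i2, j2) then real (x i2 j2) else 1)" for c
  define ry where "ry c = (if c = (i1, j2) then real (y i1 j2) else 1)
    * (if c = (i2, j1) then real (y i2 j1) else 1)" for c
  have cell: "fact (x a b) * ry (a, b) = fact (y a b) * rx (a, b)" for a b
  proof -
    consider "(a, b) = (i1, j1)" | "(a, b) = (i2, j2)" | "(a, b) = (i1, j2)" | "(a, b) = (i2, j1)"
      | "(a, b) \<notin> {(i1, j1), (i2, j2), (i1, j2), (i2, j1)}" by blast
    then show ?thesis
    proof cases
      case 5
      then show ?thesis
        using e(5)[OF 5] by (auto simp: rx_def ry_def)
    qed (use d e in \<open>auto simp: rx_def ry_def fact_Suc\<close>)
  qed
  have inR: "(i1, j1) \<in> R" "(i2, j2) \<in> R" "(i1, j2) \<in> R" "(i2, j1) \<in> R"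
    unfolding R_def using d by auto
  have "F x * (real (y i1 j2) * real (y i2 j1)) = (\<Prod>c\<in>R. fact (x (fst c) (snd c)) * ry c)"
    unfolding F_def ry_def prod.distrib using inR d by (simp add: R_def prod.delta)
  also have "\<dots> = (\<Prod>c\<in>R. fact (y (fst c) (snd c)) * rx c)"
    using cell by (intro prod.cong) (auto simp: split_paired_all)
  also have "\<dots> = F y * (real (x i1 j1) * real (x i2 j2))"
    unfolding F_def rx_def prod.distrib using inR d by (simp add: R_def prod.delta)
  finally have key:
    "F x * (real (y i1 j2) * real (y i2 j1)) = F y * (real (x i1 j1) * real (x i2 j2))" .
  have F_pos: "0 < F z" for z
    unfolding F_def by (intro prod_pos) auto
  have "piFY lam mu z = (\<Prod>i<length lam. fact (lam ! i)) * (\<Prod>j<length mu. fact (mu ! j))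
      / (fact (sum_list lam) * F z)" for z
    unfolding piFY_def F_def R_def by (simp add: prod.cartesian_product case_prod_beta)
  then show ?thesis
    using key F_pos[of x] F_pos[of y] by (simp add: field_simps)
qed

lemma max_entry_ge:
  assumes "x \<in> tables lam mu" "i < length lam" "j < length mu"
  shows "x i j \<le> max_entry lam mu"
proof -
  have "finite {x i j | x i j. x \<in> tables lam mu \<and> i < length lam \<and> j < length mu}"
    by (rule finite_subset[of _ "{..sum_list lam}"]) (auto intro: tables_entry_le_sum)
  then show ?thesis
    unfolding max_entry_def using assms by (intro Max_ge) blast+
qed

section \<open>The four chains on tables\<close>

lemma kernels_off_diag:
  assumes "x \<noteq> y"
  shows "P_U lam mu x y = PU_off lam mu x y" "P_FY lam mu x y = PFY_off lam mu x y"
    and "P_UM lam mu x y = min (PFY_off lam mu x y) (PFY_off lam mu y x)"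
    and "P_FYM lam mu x y = PU_off lam mu x y * min 1 (piFY lam mu y / piFY lam mu x)"
  using assms by (auto simp: P_U_def P_FY_def P_UM_def P_FYM_def kernel_of_def)

lemma kernels_no_move:
  assumes "x \<noteq> y" and "\<not> (\<exists>q. is_move (length lam) (length mu) q x y)"
  shows "P_U lam mu x y = 0" "P_FY lam mu x y = 0" "P_UM lam mu x y = 0" "P_FYM lam mu x y = 0"
  using assms ex_is_move_sym[of "length lam" "length mu" x y]
  by (auto simp: kernels_off_diag PU_off_def PFY_off_def)

lemma kernels_move:
  assumes m: "is_move (length lam) (length mu) (i1, j1, i2, j2) x y" and "y \<in> tables lam mu"
  defines "u \<equiv> real (x i1 j1) * real (x i2 j2)" and "v \<equiv> real (y i1 j2) * real (y i2 j1)"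
  shows "P_U lam mu x y = 2 / real (length lam * length mu) ^ 2"
    and "P_FY lam mu x y = 2 / real (sum_list lam) ^ 2 * u"
    and "P_UM lam mu x y = 2 / real (sum_list lam) ^ 2 * min u v"
    and "P_FYM lam mu x y = 2 / real (length lam * length mu) ^ 2 * min 1 (u / v)"
proof -
  have xy: "x \<noteq> y"
    using is_move_ne[OF m] by simp
  have PFY: "PFY_off lam mu x y = 2 / real (sum_list lam) ^ 2 * u"
    "PFY_off lam mu y x = 2 / real (sum_list lam) ^ 2 * v"
    unfolding PFY_off_move[OF m] PFY_off_move[OF is_move_reverse[OF m]] u_def v_def
    by (simp_all add: mult.assoc)
  have "0 < v"
    unfolding v_def using is_move_entries(3,4)[OF m] by simp
  moreover have "piFY lam mu y * v = u * piFY lam mu x"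
    using piFY_move_balance[OF m] unfolding u_def v_def by (simp add: mult.commute)
  ultimately have "piFY lam mu y / piFY lam mu x = u / v"
    using piFY_pos[of lam mu x] by (simp add: frac_eq_eq)
  moreover have "PU_off lam mu x y = 2 / real (length lam * length mu) ^ 2"
    unfolding PU_off_def using m xy \<open>y \<in> tables lam mu\<close> by auto
  ultimately show "P_U lam mu x y = 2 / real (length lam * length mu) ^ 2"
    and "P_FY lam mu x y = 2 / real (sum_list lam) ^ 2 * u"
    and "P_UM lam mu x y = 2 / real (sum_list lam) ^ 2 * min u v"
    and "P_FYM lam mu x y = 2 / real (length lam * length mu) ^ 2 * min 1 (u / v)"
    unfolding kernels_off_diag[OF xy] PFY
    by (simp_all add: min_mult_distrib_left)
qed

lemma move_products_bounds:
  assumes m: "is_move (length lam) (length mu) (i1, j1, i2, j2) x y"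
    and "x \<in> tables lam mu" "y \<in> tables lam mu"
  defines "u \<equiv> real (x i1 j1) * real (x i2 j2)" and "v \<equiv> real (y i1 j2) * real (y i2 j1)"
    and "M \<equiv> real (max_entry lam mu)"
  shows "1 \<le> u" "u \<le> M\<^sup>2" "1 \<le> v" "v \<le> M\<^sup>2"
proof -
  note d = is_move_quads[OF m] and e = is_move_entries[OF m]
  have "1 \<le> real (x i1 j1)" "1 \<le> real (x i2 j2)" "1 \<le> real (y i1 j2)" "1 \<le> real (y i2 j1)"
    using e by simp_all
  moreover have "real (x i1 j1) \<le> M" "real (x i2 j2) \<le> M" "real (y i1 j2) \<le> M" "real (y i2 j1) \<le> M"
    unfolding M_def using max_entry_ge assms(2,3) d by (simp_all add: of_nat_le_iff)
  ultimately have "1 * 1 \<le> u" "u \<le> M * M" "1 * 1 \<le> v" "v \<le> M * M"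
    unfolding u_def v_def by (intro mult_mono; simp)+
  then show "1 \<le> u" "u \<le> M\<^sup>2" "1 \<le> v" "v \<le> M\<^sup>2"
    by (simp_all add: power2_eq_square)
qed

context
  fixes lam mu :: "nat list" and x y :: table
  assumes x: "x \<in> tables lam mu" and y: "y \<in> tables lam mu" and xy: "x \<noteq> y"
begin

text \<open>For a move, the rates of the two chains in each pair differ by the factor \<open>(IJ/n)\<^sup>2\<close>
  times a ratio of products of two entries, and such products lie between \<open>1\<close> and \<open>M\<^sup>2\<close>.\<close>

lemma chains_comparison:
  defines "c \<equiv> real (length lam * length mu) ^ 2 / real (sum_list lam) ^ 2"
    and "M \<equiv> real (max_entry lam mu)"
  shows "c * P_U lam mu x y \<le> P_UM lam mu x y" "P_UM lam mu x y \<le> c * M\<^sup>2 * P_U lam mu x y"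
    and "c * P_FYM lam mu x y \<le> P_FY lam mu x y" "P_FY lam mu x y \<le> c * M\<^sup>2 * P_FYM lam mu x y"
proof -
  have "(c * P_U lam mu x y \<le> P_UM lam mu x y \<and> P_UM lam mu x y \<le> c * M\<^sup>2 * P_U lam mu x y)
    \<and> (c * P_FYM lam mu x y \<le> P_FY lam mu x y \<and> P_FY lam mu x y \<le> c * M\<^sup>2 * P_FYM lam mu x y)"
  proof (cases "\<exists>q. is_move (length lam) (length mu) q x y")
    case True
    then obtain i1 j1 i2 j2 where m: "is_move (length lam) (length mu) (i1, j1, i2, j2) x y"
      by (metis prod_cases4)
    define u where "u = real (x i1 j1) * real (x i2 j2)"
    define v where "v = real (y i1 j2) * real (y i2 j1)"
    define A where "A = 2 / real (sum_list lam) ^ 2"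
    note k = kernels_move[OF m y, folded u_def v_def A_def]
    note b = move_products_bounds[OF m x y, folded u_def v_def M_def]
    have "0 < length lam * length mu"
      using is_move_quads(1,3)[OF m] by auto
    then have cB: "c * (2 / real (length lam * length mu) ^ 2) = A"
      unfolding c_def A_def by (simp add: field_simps)
    have "0 \<le> A"
      unfolding A_def by simp
    have "u \<le> M\<^sup>2 * (u / v)"
      using b by (simp add: field_simps mult_left_mono)
    then have "u \<le> M\<^sup>2 * min 1 (u / v)"
      using b by (simp add: min_mult_distrib_left)
    then have "A * 1 \<le> A * min u v" "A * min u v \<le> A * M\<^sup>2"
      and "A * min 1 (u / v) \<le> A * u" "A * u \<le> A * (M\<^sup>2 * min 1 (u / v))"
      using b \<open>0 \<le> A\<close> by (intro mult_left_mono; simp)+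
    then show ?thesis
      unfolding k cB[symmetric] by (simp add: mult_ac)
  next
    case False
    then show ?thesis
      using kernels_no_move[OF xy] by simp
  qed
  then show "c * P_U lam mu x y \<le> P_UM lam mu x y" "P_UM lam mu x y \<le> c * M\<^sup>2 * P_U lam mu x y"
    and "c * P_FYM lam mu x y \<le> P_FY lam mu x y" "P_FY lam mu x y \<le> c * M\<^sup>2 * P_FYM lam mu x y"
    by simp_all
qed

end

lemma PU_off_nonneg: "0 \<le> PU_off lam mu x y"
  unfolding PU_off_def by simp

lemma PFY_off_nonneg: "0 \<le> PFY_off lam mu x y"
  unfolding PFY_off_def by (auto split: prod.splits)

lemma PFY_off_detailed_balance:
  "piFY lam mu x * PFY_off lam mu x y = piFY lam mu y * PFY_off lam mu y x"
proof (cases "\<exists>q. is_move (length lam) (length mu) q x y")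
  case True
  then obtain i1 j1 i2 j2 where m: "is_move (length lam) (length mu) (i1, j1, i2, j2) x y"
    by (metis prod_cases4)
  show ?thesis
    unfolding PFY_off_move[OF m] PFY_off_move[OF is_move_reverse[OF m]]
    using piFY_move_balance[OF m] by (simp add: field_simps)
next
  case False
  then show ?thesis
    using ex_is_move_sym by (simp add: PFY_off_def)
qed

context
  fixes lam mu :: "nat list"
  assumes card: "2 \<le> card (tables lam mu)"
begin

lemma reversible_chain_P_U: "reversible_chain (tables lam mu) (\<lambda>_. 1) (P_U lam mu)"
  unfolding P_U_def using card
  by (intro reversible_chain_kernel_of finite_tables) (auto simp: PU_off_nonneg PU_off_sym)

lemma reversible_chain_P_UM: "reversible_chain (tables lam mu) (\<lambda>_. 1) (P_UM lam mu)"
  unfolding P_UM_def using card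
  by (intro reversible_chain_kernel_of finite_tables)
    (auto simp: kernels_off_diag PFY_off_nonneg min.commute)

lemma reversible_chain_P_FY: "reversible_chain (tables lam mu) (piFY lam mu) (P_FY lam mu)"
  unfolding P_FY_def using card
  by (intro reversible_chain_kernel_of finite_tables piFY_pos PFY_off_nonneg
      PFY_off_detailed_balance)

lemma reversible_chain_P_FYM: "reversible_chain (tables lam mu) (piFY lam mu) (P_FYM lam mu)"
  unfolding P_FYM_def
proof (intro reversible_chain_kernel_of finite_tables piFY_pos card)
  let ?acc = "\<lambda>x y. min 1 (piFY lam mu y / piFY lam mu x)"
  have scale: "piFY lam mu x * ?acc x y = min (piFY lam mu x) (piFY lam mu y)" for x y
    using piFY_pos[of lam mu x] by (auto simp: min_def field_simps)
  fix x y assume x: "x \<in> tables lam mu" and y: "y \<in> tables lam mu" and xy: "x \<noteq> y"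
  show "0 \<le> P_U lam mu x y * ?acc x y"
    using xy piFY_pos[of lam mu x] piFY_pos[of lam mu y]
    by (simp add: kernels_off_diag PU_off_nonneg)
  have "piFY lam mu x * (P_U lam mu x y * ?acc x y) = P_U lam mu x y * (piFY lam mu x * ?acc x y)"
    by (simp add: mult_ac)
  also have "\<dots> = P_U lam mu y x * (piFY lam mu y * ?acc y x)"
    unfolding scale using xy PU_off_sym[OF x y] by (simp add: kernels_off_diag min.commute)
  also have "\<dots> = piFY lam mu y * (P_U lam mu y x * ?acc y x)"
    by (simp add: mult_ac)
  finally show
    "piFY lam mu x * (P_U lam mu x y * ?acc x y) = piFY lam mu y * (P_U lam mu y x * ?acc y x)" .
qed

end

lemma sum_eq_imp_less_somewhere:
  fixes f g :: "'a \<Rightarrow> nat"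
  assumes "finite A" "(\<Sum>k\<in>A. f k) = (\<Sum>k\<in>A. g k)" "k0 \<in> A" "g k0 < f k0"
  shows "\<exists>k\<in>A. f k < g k"
proof (rule ccontr)
  assume "\<not> (\<exists>k\<in>A. f k < g k)"
  then have "(\<Sum>k\<in>A. g k) < (\<Sum>k\<in>A. f k)"
    using assms by (intro sum_strict_mono_ex1) auto
  then show False
    using assms by simp
qed

lemma tables_alternating_rectangle:
  assumes x: "x \<in> tables lam mu" and y: "y \<in> tables lam mu" and "x \<noteq> y"
  shows "\<exists>i1 j1 i2 j2. i1 < length lam \<and> i2 < length lam \<and> j1 < length mu \<and> j2 < length mu
    \<and> x i1 j1 < y i1 j1 \<and> y i1 j2 < x i1 j2 \<and> y i2 j1 < x i2 j1"
proof -
  let ?I = "length lam" and ?J = "length mu"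
  have row: "(\<Sum>j<?J. x i j) = (\<Sum>j<?J. y i j)" if "i < ?I" for i
    using tables_row_sum[OF x that] tables_row_sum[OF y that] by simp
  have col: "(\<Sum>i<?I. x i j) = (\<Sum>i<?I. y i j)" if "j < ?J" for j
    using tables_col_sum[OF x that] tables_col_sum[OF y that] by simp
  obtain i j where ij: "x i j \<noteq> y i j"
    using \<open>x \<noteq> y\<close> by (meson ext)
  then have i: "i < ?I" and j: "j < ?J"
    using tables_outside[OF x] tables_outside[OF y] by (metis not_le)+
  obtain i1 j1 where i1: "i1 < ?I" and j1: "j1 < ?J" and lt: "x i1 j1 < y i1 j1"
  proof (cases "x i j < y i j")
    case False
    then have "y i j < x i j"
      using ij by simp
    then obtain j' where "j' < ?J" "x i j' < y i j'"
      using sum_eq_imp_less_somewhere[of "{..<?J}" "\<lambda>j. x i j" "\<lambda>j. y i j" j] row[OF i] j by auto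
    then show ?thesis
      using i that by blast
  qed (use i j in blast)
  obtain j2 where "j2 < ?J" "y i1 j2 < x i1 j2"
    using sum_eq_imp_less_somewhere[of "{..<?J}" "\<lambda>j. y i1 j" "\<lambda>j. x i1 j" j1] row[OF i1] j1 lt by auto
  moreover obtain i2 where "i2 < ?I" "y i2 j1 < x i2 j1"
    using sum_eq_imp_less_somewhere[of "{..<?I}" "\<lambda>i. y i j1" "\<lambda>i. x i j1" i1] col[OF j1] i1 lt by auto
  ultimately show ?thesis
    using i1 j1 lt by blast
qed

lemma rectangle_shift_in_tables:
  assumes x: "x \<in> tables lam mu"
    and "i1 < length lam" "i2 < length lam" "j1 < length mu" "j2 < length mu" "i1 \<noteq> i2" "j1 \<noteq> j2"
    and "k \<le> x i1 j2" "k \<le> x i2 j1"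
  shows "(\<lambda>i j. if (i, j) = (i1, j1) \<or> (i, j) = (i2, j2) then x i j + k
      else if (i, j) = (i1, j2) \<or> (i, j) = (i2, j1) then x i j - k else x i j) \<in> tables lam mu"
    (is "?z \<in> _")
proof -
  define sgn :: "nat \<Rightarrow> nat \<Rightarrow> int" where "sgn i j =
    (if (i, j) = (i1, j1) then 1 else 0) + (if (i, j) = (i2, j2) then 1 else 0)
    - (if (i, j) = (i1, j2) then 1 else 0) - (if (i, j) = (i2, j1) then 1 else 0)" for i j
  have z: "int (?z i j) = int (x i j) + int k * sgn i j" for i j
    using assms unfolding sgn_def by auto
  have "(\<Sum>j<length mu. sgn i j) = 0" for i
    using assms unfolding sgn_def
    by (cases "i = i1"; cases "i = i2") (simp_all add: sum.distrib sum_subtractf)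
  then have "int (\<Sum>j<length mu. ?z i j) = int (\<Sum>j<length mu. x i j)" for i
    by (simp only: of_nat_sum z sum.distrib flip: sum_distrib_left)
  moreover have "(\<Sum>i<length lam. sgn i j) = 0" for j
    using assms unfolding sgn_def
    by (cases "j = j1"; cases "j = j2") (simp_all add: sum.distrib sum_subtractf)
  then have "int (\<Sum>i<length lam. ?z i j) = int (\<Sum>i<length lam. x i j)" for j
    by (simp only: of_nat_sum z sum.distrib flip: sum_distrib_left)
  ultimately show ?thesis
    using x assms(2-5) unfolding tables_def of_nat_eq_iff by auto
qed

text \<open>Two distinct tables give a rectangle along which mass can be shifted until one of its
  decreasing cells holds exactly \<open>1\<close>.\<close>

lemma tables_entry_one:
  assumes "2 \<le> card (tables lam mu)"
  obtains z i j where "z \<in> tables lam mu" "i < length lam" "j < length mu" "z i j = 1"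
proof -
  obtain x B where "tables lam mu = insert x B" "x \<notin> B" "1 \<le> card B"
    using assms card_le_Suc_iff[of 1 "tables lam mu"] by auto
  then obtain y where x: "x \<in> tables lam mu" and y: "y \<in> tables lam mu" and "x \<noteq> y"
    by (metis card.empty insertCI not_one_le_zero subsetI subset_empty)
  then obtain i1 j1 i2 j2
    where ij: "i1 < length lam" "i2 < length lam" "j1 < length mu" "j2 < length mu"
    and lt: "x i1 j1 < y i1 j1" "y i1 j2 < x i1 j2" "y i2 j1 < x i2 j1"
    using tables_alternating_rectangle by blast
  define k where "k = min (x i1 j2) (x i2 j1) - 1"
  let ?z = "\<lambda>i j. if (i, j) = (i1, j1) \<or> (i, j) = (i2, j2) then x i j + k
      else if (i, j) = (i1, j2) \<or> (i, j) = (i2, j1) then x i j - k else x i j"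
  have ne: "i1 \<noteq> i2" "j1 \<noteq> j2"
    using lt by auto
  have "?z \<in> tables lam mu"
    using rectangle_shift_in_tables[OF x ij ne] unfolding k_def by simp
  moreover have "?z i1 j2 = 1 \<or> ?z i2 j1 = 1"
    using ne lt unfolding k_def by auto
  ultimately show ?thesis
    using that ij by blast
qed

lemma min_pos_entry_eq_1:
  assumes "2 \<le> card (tables lam mu)"
  shows "min_pos_entry lam mu = 1"
  unfolding min_pos_entry_def
proof (rule Min_eqI)
  show "finite {x i j |x i j. x \<in> tables lam mu \<and> i < length lam \<and> j < length mu \<and> 0 < x i j}"
    by (rule finite_subset[of _ "{..sum_list lam}"]) (auto intro: tables_entry_le_sum)
  obtain z i j where "z \<in> tables lam mu" "i < length lam" "j < length mu" "z i j = 1"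
    using tables_entry_one[OF assms] .
  then have "\<exists>x i j. 1 = x i j \<and> x \<in> tables lam mu \<and> i < length lam \<and> j < length mu \<and> 0 < x i j"
    by (intro exI[of _ z] exI[of _ i] exI[of _ j]) simp
  then show "1 \<in> {x i j |x i j. x \<in> tables lam mu \<and> i < length lam \<and> j < length mu \<and> 0 < x i j}"
    by simp
qed auto

lemma max_entry_le_margins:
  assumes "tables lam mu \<noteq> {}" "lam \<noteq> []" "mu \<noteq> []"
  shows "max_entry lam mu \<le> Max {max (lam ! i) (mu ! j) | i j. i < length lam \<and> j < length mu}"
  unfolding max_entry_def
proof (rule Max.boundedI)
  show "finite {x i j |x i j. x \<in> tables lam mu \<and> i < length lam \<and> j < length mu}"
    by (rule finite_subset[of _ "{..sum_list lam}"]) (auto intro: tables_entry_le_sum)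
  show "{x i j |x i j. x \<in> tables lam mu \<and> i < length lam \<and> j < length mu} \<noteq> {}"
    using assms by fastforce
  fix e assume "e \<in> {x i j |x i j. x \<in> tables lam mu \<and> i < length lam \<and> j < length mu}"
  then obtain x i j where e: "e = x i j" and x: "x \<in> tables lam mu" and i: "i < length lam"
    and j: "j < length mu" by blast
  have "finite {max (lam ! i) (mu ! j) | i j. i < length lam \<and> j < length mu}"
    by (rule finite_subset[of _ "(\<lambda>(i, j). max (lam ! i) (mu ! j)) ` ({..<length lam} \<times> {..<length mu})"])
      auto
  then have "max (lam ! i) (mu ! j) \<le> Max {max (lam ! i) (mu ! j) | i j. i < length lam \<and> j < length mu}"
    using i j by (intro Max_ge) blast+
  then show "e \<le> Max {max (lam ! i) (mu ! j) | i j. i < length lam \<and> j < length mu}"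
    using tables_entry_le_row[OF x i, of j] e by simp
qed

lemma tables_dims_pos:
  assumes "2 \<le> card (tables lam mu)"
  shows "0 < sum_list lam" "0 < length lam" "0 < length mu" "1 \<le> max_entry lam mu"
proof -
  obtain z i j where "z \<in> tables lam mu" "i < length lam" "j < length mu" "z i j = 1"
    using tables_entry_one[OF assms] .
  then show "0 < sum_list lam" "0 < length lam" "0 < length mu" "1 \<le> max_entry lam mu"
    using tables_entry_le_sum[of z lam mu i j] max_entry_ge[of z lam mu i j] by auto
qed

lemma relaxation_time_comparisons:
  assumes card: "2 \<le> card (tables lam mu)"
  defines "c \<equiv> real (length lam * length mu) ^ 2 / real (sum_list lam) ^ 2"
    and "M \<equiv> real (max_entry lam mu)" and "\<tau> \<equiv> relaxation_time (tables lam mu)"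
  shows "c * \<tau> (P_UM lam mu) \<le> \<tau> (P_U lam mu)" "\<tau> (P_U lam mu) \<le> c * M\<^sup>2 * \<tau> (P_UM lam mu)"
    and "c * \<tau> (P_FY lam mu) \<le> \<tau> (P_FYM lam mu)" "\<tau> (P_FYM lam mu) \<le> c * M\<^sup>2 * \<tau> (P_FY lam mu)"
proof -
  have c: "0 < c" "0 < c * M\<^sup>2"
    using tables_dims_pos[OF card] unfolding c_def M_def
    by (auto simp: zero_less_divide_iff zero_less_mult_iff simp del: sum_list_eq_0_iff)
  show "c * \<tau> (P_UM lam mu) \<le> \<tau> (P_U lam mu)" "\<tau> (P_U lam mu) \<le> c * M\<^sup>2 * \<tau> (P_UM lam mu)"
    unfolding \<tau>_def
    using relaxation_time_comparison[OF reversible_chain_P_UM[OF card] reversible_chain_P_U[OF card]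
        c chains_comparison(1,2)[where lam = lam and mu = mu, folded c_def M_def]]
    by blast+
  show "c * \<tau> (P_FY lam mu) \<le> \<tau> (P_FYM lam mu)" "\<tau> (P_FYM lam mu) \<le> c * M\<^sup>2 * \<tau> (P_FY lam mu)"
    unfolding \<tau>_def
    using relaxation_time_comparison[OF reversible_chain_P_FY[OF card] reversible_chain_P_FYM[OF card]
        c chains_comparison(3,4)[where lam = lam and mu = mu, folded c_def M_def]]
    by blast+
qed

theorem theorem5p2:
  fixes lam mu :: "nat list" and n :: nat
  assumes "is_partition lam n" and "is_partition mu n"
    and "card (tables lam mu) \<ge> 2"
  defines "I \<equiv> real (length lam)" and "J \<equiv> real (length mu)"
    and "T \<equiv> tables lam mu"
    and "m \<equiv> real (min_pos_entry lam mu)" and "M \<equiv> real (max_entry lam mu)"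
  shows
    "(m\<^sup>2 * (I * J)\<^sup>2 / (real n)\<^sup>2 * relaxation_time T (P_UM lam mu) \<le> relaxation_time T (P_U lam mu)
     \<and> relaxation_time T (P_U lam mu) \<le> M\<^sup>2 * (I * J)\<^sup>2 / (real n)\<^sup>2 * relaxation_time T (P_UM lam mu))
    \<and> ((real n)\<^sup>2 / ((I * J)\<^sup>2 * M ^ 4) * relaxation_time T (P_FYM lam mu) \<le> relaxation_time T (P_FY lam mu)
     \<and> relaxation_time T (P_FY lam mu) \<le> (real n)\<^sup>2 / ((I * J)\<^sup>2 * m ^ 4) * relaxation_time T (P_FYM lam mu))
    \<and> min_pos_entry lam mu \<ge> 1
    \<and> max_entry lam mu \<le> Max {max (lam ! i) (mu ! j) | i j. i < length lam \<and> j < length mu}"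
proof -
  define c where "c = real (length lam * length mu) ^ 2 / real (sum_list lam) ^ 2"
  note pos = tables_dims_pos[OF assms(3)]
  note \<tau> = relaxation_time_comparisons[OF assms(3), folded c_def M_def T_def]
  have n: "n = sum_list lam"
    using assms(1) unfolding is_partition_def by simp
  have m: "m = 1"
    unfolding m_def using min_pos_entry_eq_1[OF assms(3)] by simp
  have M: "1 \<le> M\<^sup>2" and c: "0 < c" and cM: "0 < c * M\<^sup>2"
    using pos unfolding M_def c_def
    by (auto simp: zero_less_divide_iff zero_less_mult_iff simp del: sum_list_eq_0_iff)
  have rw: "m\<^sup>2 * (I * J)\<^sup>2 / (real n)\<^sup>2 = c" "M\<^sup>2 * (I * J)\<^sup>2 / (real n)\<^sup>2 = c * M\<^sup>2"
    "(real n)\<^sup>2 / ((I * J)\<^sup>2 * m ^ 4) = 1 / c"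
    using n pos m unfolding c_def I_def J_def by (simp_all add: field_simps)
  have "(real n)\<^sup>2 / ((I * J)\<^sup>2 * M ^ 4) * relaxation_time T (P_FYM lam mu)
      = relaxation_time T (P_FYM lam mu) / (c * M\<^sup>2) / M\<^sup>2"
    using n pos unfolding c_def I_def J_def M_def by (simp add: field_simps)
  also have "\<dots> \<le> relaxation_time T (P_FYM lam mu) / (c * M\<^sup>2) / 1"
    using M c relaxation_time_nonneg[OF reversible_chain_P_FYM[OF assms(3)]] unfolding T_def
    by (intro divide_left_mono) auto
  also have "\<dots> \<le> relaxation_time T (P_FY lam mu)"
    using \<tau>(4) cM by (simp add: pos_divide_le_eq mult.commute)
  moreover have "relaxation_time T (P_FY lam mu) \<le> 1 / c * relaxation_time T (P_FYM lam mu)"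
    using \<tau>(3) c by (simp add: field_simps)
  moreover have "max_entry lam mu \<le> Max {max (lam ! i) (mu ! j) | i j. i < length lam \<and> j < length mu}"
    using assms(3) pos by (intro max_entry_le_margins) auto
  ultimately show ?thesis
    using \<tau>(1,2) min_pos_entry_eq_1[OF assms(3)] unfolding rw T_def by simp
qed

end
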